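(* Let $a<b$, $L=b-a$, $h>0$. There exist constants $c_0,C>0$, independent of $h$, such that for every $\theta_0\in\mathbb C$ with $|\theta_0|\le c_0$ the operator $W_{\theta_0}$ is bounded on $L^2(\mathbb R)$ and $\|W_{\theta_0}-\mathrm{Id}\|_{\mathcal L(L^2(\mathbb R))}\le C|\theta_0|$; i.e. $W_{\theta_0}-\mathrm{Id}=\mathcal O(|\theta_0|)$ in operator norm.
   Context: Set $c_\pm(\theta_0)=e^{\theta_0/2}\pm e^{\frac32\theta_0}$ and $d(\theta_0,k)=c_+(\theta_0)^2e^{-ikL/h}-c_-(\theta_0)^2e^{ikL/h}$. For $k>0$ let $A(k)=2c_+e^{-ikL/h}/d$, $B(k)=-2c_-e^{2ika/h}e^{ikL/h}/d$, $T(k)=e^{-ikL/h}(c_+^2-c_-^2)/d$, $R(k)=-2ic_+c_-e^{2ika/h}\sin(kL/h)/d$, and define $\psi_-(k,x)=e^{ikx/h}+R(k)e^{-ikx/h}$ for $x<a$, $A(k)e^{ikx/h}+B(k)e^{-ikx/h}$ for $x\in(a,b)$, $T(k)e^{ikx/h}$ for $x>b$. For $k<0$ let $\tilde A(k)=A(-k)$, $\tilde B(k)=e^{4ika/h}e^{2ikL/h}B(-k)$, $\tilde T(k)=T(-k)$, $\tilde R(k)=e^{4ika/h}e^{2ikL/h}R(-k)$, and $\psi_-(k,x)=\tilde T(k)e^{ikx/h}$ for $x<a$, $\tilde A(k)e^{ikx/h}+\tilde B(k)e^{-ikx/h}$ for $x\in(a,b)$, $e^{ikx/h}+\tilde R(k)e^{-ikx/h}$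 for $x>b$. ($\psi_-(k,\cdot)$ are the generalized eigenfunctions of $-h^2\partial_x^2$ with the interface conditions $e^{-\theta_0/2}u(b^+)=u(b^-)$, $e^{-\frac32\theta_0}u'(b^+)=u'(b^-)$, $e^{-\theta_0/2}u(a^-)=u(a^+)$, $e^{-\frac32\theta_0}u'(a^-)=u'(a^+)$.) $W_{\theta_0}$ is the operator with integral kernel $W_{\theta_0}(x,y)=\int_{-\infty}^{+\infty}\psi_-(k,x)e^{-iky/h}\frac{dk}{2\pi h}$, i.e. $W_{\theta_0}u(x)=\int\psi_-(k,x)(\mathcal Fu)(k)\frac{dk}{(2\pi h)^{1/2}}$ with $\mathcal Fu(k)=\int u(y)e^{-iky/h}\frac{dy}{(2\pi h)^{1/2}}$. *)

theory Defs
  imports "HOL-Analysis.Analysis"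
begin

definition cp :: "complex \<Rightarrow> complex" where
  "cp \<theta> = exp (\<theta>/2) + exp (3/2*\<theta>)"
definition cm :: "complex \<Rightarrow> complex" where
  "cm \<theta> = exp (\<theta>/2) - exp (3/2*\<theta>)"

definition ei :: "real \<Rightarrow> complex" where
  "ei t = exp (\<i> * of_real t)"

definition dd :: "real \<Rightarrow> real \<Rightarrow> real \<Rightarrow> complex \<Rightarrow> real \<Rightarrow> complex" where
  "dd a b h \<theta> k = (cp \<theta>)^2 * ei (- k*(b-a)/h) - (cm \<theta>)^2 * ei (k*(b-a)/h)"

definition AA :: "real \<Rightarrow> real \<Rightarrow> real \<Rightarrow> complex \<Rightarrow> real \<Rightarrow> complex" where
  "AA a b h \<theta> k = 2 * cp \<theta> * ei (- k*(b-a)/h) / dd a b h \<theta> k"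
definition BB :: "real \<Rightarrow> real \<Rightarrow> real \<Rightarrow> complex \<Rightarrow> real \<Rightarrow> complex" where
  "BB a b h \<theta> k = - 2 * cm \<theta> * ei (2*k*a/h) * ei (k*(b-a)/h) / dd a b h \<theta> k"
definition TT :: "real \<Rightarrow> real \<Rightarrow> real \<Rightarrow> complex \<Rightarrow> real \<Rightarrow> complex" where
  "TT a b h \<theta> k = ei (- k*(b-a)/h) * ((cp \<theta>)^2 - (cm \<theta>)^2) / dd a b h \<theta> k"
definition RR :: "real \<Rightarrow> real \<Rightarrow> real \<Rightarrow> complex \<Rightarrow> real \<Rightarrow> complex" where
  "RR a b h \<theta> k = - 2 * \<i> * cp \<theta> * cm \<theta> * ei (2*k*a/h)
      * of_real (sin (k*(b-a)/h)) / dd a b h \<theta> k"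

text \<open>Generalized eigenfunctions psi_-(k,x). The values at k = 0 and at x = a, x = b
  (null sets) are fixed by an arbitrary convention.\<close>
definition psi :: "real \<Rightarrow> real \<Rightarrow> real \<Rightarrow> complex \<Rightarrow> real \<Rightarrow> real \<Rightarrow> complex" where
  "psi a b h \<theta> k x =
    (if k > 0 then
       (if x < a then ei (k*x/h) + RR a b h \<theta> k * ei (- k*x/h)
        else if x < b then AA a b h \<theta> k * ei (k*x/h) + BB a b h \<theta> k * ei (- k*x/h)
        else TT a b h \<theta> k * ei (k*x/h))
     else
       (let At = AA a b h \<theta> (-k);
            Bt = ei (4*k*a/h) * ei (2*k*(b-a)/h) * BB a b h \<theta> (-k);
            Tt = TT a b h \<theta> (-k);
            Rt = ei (4*k*a/h) * ei (2*k*(b-a)/h) * RR a b h \<theta> (-k)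
        in if x < a then Tt * ei (k*x/h)
           else if x < b then At * ei (k*x/h) + Bt * ei (- k*x/h)
           else ei (k*x/h) + Rt * ei (- k*x/h)))"

definition hFT :: "real \<Rightarrow> (real \<Rightarrow> complex) \<Rightarrow> real \<Rightarrow> complex" where
  "hFT h u k = (LINT y|lborel. u y * ei (- k*y/h)) / of_real (sqrt (2*pi*h))"

definition Wop :: "real \<Rightarrow> real \<Rightarrow> real \<Rightarrow> complex \<Rightarrow> (real \<Rightarrow> complex) \<Rightarrow> real \<Rightarrow> complex" where
  "Wop a b h \<theta> u x = (LINT k|lborel. psi a b h \<theta> k x * hFT h u k) / of_real (sqrt (2*pi*h))"

end

theory Submission
  imports Defs "HOL-Probability.Probability"
begin

(* On each of the regions x < a, a < x < b, x > b the eigenfunction psi_-(k, x) is the plane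
   wave e^(ikx/h) plus alpha(k) e^(ikx/h) + beta(k) e^(-ikx/h), where every coefficient is
   O(|theta0|) uniformly in k and h: c_- = O(theta0), c_+ = 2 + O(theta0) and |d| >= 2.
   By Fourier inversion the plane waves reproduce u, so W_theta0 - Id is a sum of six bounded
   Fourier multipliers, each restricted to one region, with symbols of size O(|theta0|).
   The Plancherel inequality bounds each of them on L^2.  It is proved for integrable
   functions by weighting with e^(-eps x^2), which turns |F g|^2 into a convolution quadratic
   form with a Gaussian kernel (Schur test), and letting eps -> 0 by Fatou's lemma; Fourier
   inversion follows from Levy's uniqueness theorem for characteristic functions. *)

lemma ei_mult: "ei s * ei t = ei (s + t)"
  by (simp add: ei_def algebra_simps flip: exp_add)

lemma norm_ei [simp]: "norm (ei t) = 1"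
  by (simp add: ei_def)

lemma cnj_ei: "cnj (ei t) = ei (- t)"
  by (simp add: ei_def exp_cnj)

lemma ei_0 [simp]: "ei 0 = 1"
  by (simp add: ei_def)

lemma ei_measurable [measurable]: "ei \<in> borel_measurable borel"
  unfolding ei_def by measurable

lemma borel_measurable_cnj [measurable (raw)]:
  fixes f :: "'a \<Rightarrow> complex"
  assumes "f \<in> borel_measurable M"
  shows "(\<lambda>x. cnj (f x)) \<in> borel_measurable M"
proof -
  have "cnj \<in> borel_measurable borel"
    by (intro borel_measurable_continuous_onI continuous_intros)
  then show ?thesis using assms by (rule measurable_compose[rotated])
qed

lemma integrable_mult_bounded:
  fixes f g :: "'a \<Rightarrow> 'b::{real_normed_div_algebra, banach, second_countable_topology}"
  assumes f: "integrable M f" and [measurable]: "g \<in> borel_measurable M"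
    and g_le: "\<And>x. norm (g x) \<le> B"
  shows "integrable M (\<lambda>x. g x * f x)"
proof (rule Bochner_Integration.integrable_bound[where f="\<lambda>x. B * norm (f x)"])
  have [measurable]: "f \<in> borel_measurable M" using f by auto
  show "integrable M (\<lambda>x. B * norm (f x))" using f by simp
  show "(\<lambda>x. g x * f x) \<in> borel_measurable M" by measurable
  have "0 \<le> B" using g_le norm_ge_zero order_trans by blast
  then show "AE x in M. norm (g x * f x) \<le> norm (B * norm (f x))"
    by (intro AE_I2) (simp add: norm_mult mult_right_mono g_le)
qed

lemma lborel_Fubini_integral_dominated:
  fixes f :: "real \<Rightarrow> real \<Rightarrow> complex"
  assumes f[measurable]: "case_prod f \<in> borel_measurable (lborel \<Otimes>\<^sub>M lborel)"
  and p: "integrable lborel p" and q: "integrable lborel q"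
  and p0: "\<And>x. 0 \<le> p x" and q0: "\<And>y. 0 \<le> q y"
  and bd: "\<And>x y. norm (f x y) \<le> p x * q y"
  shows "(\<integral>y. (\<integral>x. f x y \<partial>lborel) \<partial>lborel) = (\<integral>x. (\<integral>y. f x y \<partial>lborel) \<partial>lborel)"
proof -
  have [measurable]: "p \<in> borel_measurable borel" "q \<in> borel_measurable borel"
    using p q by auto
  have "(\<integral>\<^sup>+z. norm (case_prod f z) \<partial>(lborel \<Otimes>\<^sub>M lborel))
      \<le> (\<integral>\<^sup>+z. ennreal (p (fst z) * q (snd z)) \<partial>(lborel \<Otimes>\<^sub>M lborel))"
    by (intro nn_integral_mono) (auto simp: bd intro!: ennreal_leI)
  also have "\<dots> = (\<integral>\<^sup>+x. (\<integral>\<^sup>+y. ennreal (p x * q y) \<partial>lborel) \<partial>lborel)"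
    by (subst lborel.nn_integral_fst[symmetric]) auto
  also have "\<dots> = (\<integral>\<^sup>+x. ennreal (p x) * (\<integral>\<^sup>+y. ennreal (q y) \<partial>lborel) \<partial>lborel)"
    by (intro nn_integral_cong) (simp add: ennreal_mult p0 q0 nn_integral_cmult)
  also have "\<dots> = (\<integral>\<^sup>+x. ennreal (p x) \<partial>lborel) * (\<integral>\<^sup>+y. ennreal (q y) \<partial>lborel)"
    by (simp add: nn_integral_multc)
  also have "\<dots> < \<infinity>"
    using p q p0 q0 by (simp add: nn_integral_eq_integral ennreal_mult_less_top)
  finally have "integrable (lborel \<Otimes>\<^sub>M lborel) (case_prod f)"
    by (intro integrableI_bounded) auto
  then show ?thesis by (rule lborel_pair.Fubini_integral)
qed

lemma gaussian_fourier_transform: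
  fixes c w :: real assumes c: "c > 0"
  shows "integrable lborel (\<lambda>x. complex_of_real (exp (- c * x\<^sup>2)) * ei (w * x))"
    and "(\<integral>x. complex_of_real (exp (- c * x\<^sup>2)) * ei (w * x) \<partial>lborel)
          = complex_of_real (sqrt (pi / c) * exp (- w\<^sup>2 / (4 * c)))"
proof -
  \<comment> \<open>rescale the characteristic function of the standard normal distribution\<close>
  define s where "s = 1 / sqrt (2 * c)"
  have s: "s > 0" using c by (simp add: s_def)
  have s2: "s\<^sup>2 = 1 / (2*c)" using c by (simp add: s_def power_divide)
  let ?f = "\<lambda>x. complex_of_real (exp (- c * x\<^sup>2)) * ei (w * x)"
  have ch: "char std_normal_distribution (w * s) = complex_of_real (exp (- ((w * s)\<^sup>2) / 2))"
    by (simp add: char_std_normal_distribution)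
  have "char std_normal_distribution (w * s) =
      (\<integral>x. complex_of_real (std_normal_density x) * iexp (w * s * x) \<partial>lborel)"
    unfolding char_def
    by (subst integral_density) (auto simp: normal_density_nonneg scaleR_conv_of_real)
  also have "\<dots> = (\<integral>x. complex_of_real (1 / sqrt (2 * pi)) * ?f (0 + s * x) \<partial>lborel)"
    by (intro Bochner_Integration.integral_cong refl)
       (use c in \<open>simp add: std_normal_density_def ei_def power_mult_distrib s2 field_simps\<close>)
  finally have e1: "char std_normal_distribution (w * s) =
      complex_of_real (1 / sqrt (2 * pi)) * (\<integral>x. ?f (0 + s * x) \<partial>lborel)" by simp
  have intg_norm: "integrable lborel (\<lambda>x. std_normal_density x)"
    using integrable_normal_density[of 1 0] by simp
  have "integrable lborel (\<lambda>x. ?f (0 + s * x))"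
  proof (rule Bochner_Integration.integrable_bound[where f="\<lambda>x. sqrt (2*pi) * std_normal_density x"])
    show "integrable lborel (\<lambda>x. sqrt (2*pi) * std_normal_density x)" using intg_norm by simp
    show "(\<lambda>x. ?f (0 + s * x)) \<in> borel_measurable lborel" by measurable
    show "AE x in lborel. norm (?f (0 + s * x)) \<le> norm (sqrt (2*pi) * std_normal_density x)"
    proof (intro AE_I2)
      fix x :: real
      have "c * (s * x)\<^sup>2 = x\<^sup>2 / 2" using s2 c by (simp add: power_mult_distrib field_simps)
      then show "norm (?f (0 + s * x)) \<le> norm (sqrt (2*pi) * std_normal_density x)"
        by (simp add: std_normal_density_def norm_mult)
    qed
  qed
  then show i: "integrable lborel ?f"
    using lborel_integrable_real_affine_iff[of s ?f 0] s by simp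
  have "(\<integral>x. ?f x \<partial>lborel) = \<bar>s\<bar> *\<^sub>R (\<integral>x. ?f (0 + s * x) \<partial>lborel)"
    using lborel_integral_real_affine[of s ?f 0] s by simp
  also have "(\<integral>x. ?f (0 + s * x) \<partial>lborel) = complex_of_real (sqrt (2*pi)) * char std_normal_distribution (w * s)"
    using e1 by (simp add: real_sqrt_mult)
  finally show "(\<integral>x. ?f x \<partial>lborel) = complex_of_real (sqrt (pi / c) * exp (- w\<^sup>2 / (4 * c)))"
    using s c unfolding ch
    by (simp add: scaleR_conv_of_real s_def power_mult_distrib real_sqrt_divide real_sqrt_mult field_simps)
qed

lemma gaussian_integral:
  fixes c :: real assumes c: "c > 0"
  shows "integrable lborel (\<lambda>x. exp (- c * x\<^sup>2))"
    and "(\<integral>x. exp (- c * x\<^sup>2) \<partial>lborel) = sqrt (pi / c)"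
proof -
  have "complex_integrable lborel (\<lambda>x. complex_of_real (exp (- c * x\<^sup>2)))"
    using gaussian_fourier_transform(1)[OF c, of 0] by simp
  then show "integrable lborel (\<lambda>x. exp (- c * x\<^sup>2))"
    by (simp add: complex_of_real_integrable_eq)
  have "complex_of_real (\<integral>x. exp (- c * x\<^sup>2) \<partial>lborel) = complex_of_real (sqrt (pi / c))"
    using gaussian_fourier_transform(2)[OF c, of 0] by simp
  then show "(\<integral>x. exp (- c * x\<^sup>2) \<partial>lborel) = sqrt (pi / c)"
    using of_real_eq_iff by blast
qed

lemma nn_integral_gaussian_shift:
  fixes c k :: real assumes c: "c > 0"
  shows "(\<integral>\<^sup>+x. ennreal (exp (- c * (k - x)\<^sup>2)) \<partial>lborel) = ennreal (sqrt (pi / c))"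
proof -
  have "(\<integral>\<^sup>+x. ennreal (exp (- c * x\<^sup>2)) \<partial>lborel)
      = ennreal \<bar>-1::real\<bar> * (\<integral>\<^sup>+x. ennreal (exp (- c * (k + (-1) * x)\<^sup>2)) \<partial>lborel)"
    by (rule nn_integral_real_affine) auto
  moreover have "(\<integral>\<^sup>+x. ennreal (exp (- c * x\<^sup>2)) \<partial>lborel) = ennreal (sqrt (pi / c))"
    using gaussian_integral[OF c] by (subst nn_integral_eq_integral) auto
  ultimately show ?thesis by simp
qed

lemma nn_integral_gaussian_kernel:
  fixes t \<epsilon> k :: real
  assumes t: "t \<noteq> 0" and e: "\<epsilon> > 0"
  shows "(\<integral>\<^sup>+k'. ennreal (sqrt (pi/\<epsilon>) * exp (- (t\<^sup>2/(4*\<epsilon>)) * (k - k')\<^sup>2)) \<partial>lborel)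
    = ennreal (2*pi/\<bar>t\<bar>)"
proof -
  define c where "c = t\<^sup>2/(4*\<epsilon>)"
  have c: "c > 0" using t e by (simp add: c_def)
  have "(\<integral>\<^sup>+k'. ennreal (sqrt (pi/\<epsilon>) * exp (- c * (k - k')\<^sup>2)) \<partial>lborel)
      = ennreal (sqrt (pi/\<epsilon>)) * ennreal (sqrt (pi/c))"
    using nn_integral_gaussian_shift[OF c, of k] e by (simp add: ennreal_mult nn_integral_cmult)
  also have "\<dots> = ennreal (sqrt (pi/\<epsilon>) * sqrt (pi/c))"
    using e c by (simp add: ennreal_mult)
  also have "sqrt (pi/\<epsilon>) * sqrt (pi/c) = 2*pi/\<bar>t\<bar>"
  proof -
    have "(pi/\<epsilon>) * (pi/c) = (2*pi/\<bar>t\<bar>)\<^sup>2"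
      using t e by (simp add: c_def field_simps power2_eq_square)
    then show ?thesis by (simp flip: real_sqrt_mult)
  qed
  finally show ?thesis unfolding c_def .
qed

lemma nn_integral_convolution_form_le:
  fixes g :: "real \<Rightarrow> complex" and K :: "real \<Rightarrow> real"
  assumes [measurable]: "g \<in> borel_measurable borel" "K \<in> borel_measurable borel"
    and K_nonneg: "\<And>d. K d \<ge> 0" and K_even: "\<And>d. K (- d) = K d"
    and K_mass: "\<And>k. (\<integral>\<^sup>+k'. ennreal (K (k - k')) \<partial>lborel) = ennreal \<kappa>"
  shows "(\<integral>\<^sup>+k. (\<integral>\<^sup>+k'. ennreal (norm (g k) * norm (g k') * K (k - k')) \<partial>lborel) \<partial>lborel)
    \<le> ennreal \<kappa> * (\<integral>\<^sup>+k. ennreal ((norm (g k))\<^sup>2) \<partial>lborel)"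
proof -
  define H where "H k k' = ennreal ((norm (g k))\<^sup>2 / 2) * ennreal (K (k - k'))" for k k'
  have [measurable]: "case_prod H \<in> borel_measurable (lborel \<Otimes>\<^sub>M lborel)"
    unfolding H_def by measurable
  have AM_GM: "ennreal (norm (g k) * norm (g k') * K (k - k')) \<le> H k k' + H k' k" for k k'
  proof -
    have "norm (g k) * norm (g k') \<le> (norm (g k))\<^sup>2 / 2 + (norm (g k'))\<^sup>2 / 2"
      using sum_squares_bound[of "norm (g k)" "norm (g k')"] by (simp add: field_simps)
    from mult_right_mono[OF this K_nonneg[of "k - k'"]]
    have "norm (g k) * norm (g k') * K (k - k') \<le> (norm (g k))\<^sup>2 / 2 * K (k - k') + (norm (g k'))\<^sup>2 / 2 * K (k' - k)"
      using K_even[of "k - k'"] by (simp add: algebra_simps)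
    then show ?thesis
      unfolding H_def using K_nonneg by (simp add: ennreal_mult[symmetric] flip: ennreal_plus)
  qed
  have H_mass: "(\<integral>\<^sup>+k'. H k k' \<partial>lborel) = ennreal ((norm (g k))\<^sup>2 / 2) * ennreal \<kappa>" for k
    unfolding H_def by (simp add: nn_integral_cmult K_mass)
  have "(\<integral>\<^sup>+k. (\<integral>\<^sup>+k'. ennreal (norm (g k) * norm (g k') * K (k - k')) \<partial>lborel) \<partial>lborel)
      \<le> (\<integral>\<^sup>+k. (\<integral>\<^sup>+k'. H k k' + H k' k \<partial>lborel) \<partial>lborel)"
    by (intro nn_integral_mono AM_GM)
  also have "\<dots> = (\<integral>\<^sup>+k. (\<integral>\<^sup>+k'. H k k' \<partial>lborel) \<partial>lborel) + (\<integral>\<^sup>+k. (\<integral>\<^sup>+k'. H k' k \<partial>lborel) \<partial>lborel)"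
    by (subst nn_integral_add[symmetric]) (auto intro!: nn_integral_cong nn_integral_add)
  also have "(\<integral>\<^sup>+k. (\<integral>\<^sup>+k'. H k' k \<partial>lborel) \<partial>lborel) = (\<integral>\<^sup>+k. (\<integral>\<^sup>+k'. H k k' \<partial>lborel) \<partial>lborel)"
    by (rule lborel_pair.Fubini') measurable
  also have "(\<integral>\<^sup>+k. (\<integral>\<^sup>+k'. H k k' \<partial>lborel) \<partial>lborel) + (\<integral>\<^sup>+k. (\<integral>\<^sup>+k'. H k k' \<partial>lborel) \<partial>lborel)
      = (\<integral>\<^sup>+k. ennreal ((norm (g k))\<^sup>2) * ennreal \<kappa> \<partial>lborel)"
    unfolding H_mass
    by (subst nn_integral_add[symmetric])
       (auto intro!: nn_integral_cong simp flip: distrib_right ennreal_plus)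
  also have "\<dots> = ennreal \<kappa> * (\<integral>\<^sup>+k. ennreal ((norm (g k))\<^sup>2) \<partial>lborel)"
    by (subst nn_integral_cmult[symmetric]) (auto simp: mult.commute)
  finally show ?thesis .
qed

lemma norm_integral_convolution_form_le:
  fixes g :: "real \<Rightarrow> complex" and K :: "real \<Rightarrow> real"
  assumes [measurable]: "g \<in> borel_measurable borel" "K \<in> borel_measurable borel"
    and gi: "integrable lborel g"
    and K_nonneg: "\<And>d. K d \<ge> 0" and K_le: "\<And>d. K d \<le> B" and K_even: "\<And>d. K (- d) = K d"
    and K_mass: "\<And>k. (\<integral>\<^sup>+k'. ennreal (K (k - k')) \<partial>lborel) = ennreal \<kappa>"
  shows "ennreal (norm (\<integral>k. g k * (\<integral>k'. complex_of_real (K (k - k')) * cnj (g k') \<partial>lborel) \<partial>lborel))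
    \<le> ennreal \<kappa> * (\<integral>\<^sup>+k. ennreal ((norm (g k))\<^sup>2) \<partial>lborel)"
proof -
  define \<Psi> where "\<Psi> k = (\<integral>k'. complex_of_real (K (k - k')) * cnj (g k') \<partial>lborel)" for k
  have [measurable]: "\<Psi> \<in> borel_measurable borel"
  proof -
    have "(\<lambda>k. \<integral>k'. complex_of_real (K (k - k')) * cnj (g k') \<partial>lborel) \<in> borel_measurable lborel"
      by measurable
    then show ?thesis unfolding \<Psi>_def by simp
  qed
  have Kgi: "integrable lborel (\<lambda>k'. complex_of_real (K (k - k')) * cnj (g k'))" for k
    using gi K_le K_nonneg by (intro integrable_mult_bounded) auto
  have \<Psi>_le: "norm (\<Psi> k) \<le> B * (\<integral>k. norm (g k) \<partial>lborel)" for k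
  proof -
    have "norm (\<Psi> k) \<le> (\<integral>k'. norm (complex_of_real (K (k - k')) * cnj (g k')) \<partial>lborel)"
      unfolding \<Psi>_def by (rule integral_norm_bound)
    also have "\<dots> \<le> (\<integral>k'. B * norm (g k') \<partial>lborel)"
      using integrable_norm[OF Kgi[of k]] gi
      by (intro integral_mono) (auto simp: norm_mult K_nonneg K_le mult_right_mono)
    finally show ?thesis by simp
  qed
  have "ennreal (norm (\<integral>k. g k * \<Psi> k \<partial>lborel)) \<le> (\<integral>\<^sup>+k. norm (g k) * norm (\<Psi> k) \<partial>lborel)"
  proof -
    have "integrable lborel (\<lambda>k. \<Psi> k * g k)"
      using gi \<Psi>_le by (intro integrable_mult_bounded) auto
    from integral_norm_bound_ennreal[OF this] show ?thesis by (simp add: norm_mult mult.commute)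
  qed
  also have "\<dots> \<le> (\<integral>\<^sup>+k. (\<integral>\<^sup>+k'. ennreal (norm (g k) * norm (g k') * K (k - k')) \<partial>lborel) \<partial>lborel)"
  proof (intro nn_integral_mono)
    fix k
    have "ennreal (norm (\<Psi> k)) \<le> (\<integral>\<^sup>+k'. ennreal (K (k - k') * norm (g k')) \<partial>lborel)"
      unfolding \<Psi>_def using integral_norm_bound_ennreal[OF Kgi] by (simp add: norm_mult K_nonneg)
    from mult_left_mono[OF this, of "ennreal (norm (g k))"]
    have "ennreal (norm (g k) * norm (\<Psi> k))
        \<le> ennreal (norm (g k)) * (\<integral>\<^sup>+k'. ennreal (K (k - k') * norm (g k')) \<partial>lborel)"
      by (simp add: ennreal_mult)
    also have "\<dots> = (\<integral>\<^sup>+k'. ennreal (norm (g k) * norm (g k') * K (k - k')) \<partial>lborel)"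
      by (subst nn_integral_cmult[symmetric])
         (auto intro!: nn_integral_cong simp: K_nonneg ennreal_mult[symmetric] mult_ac)
    finally show "ennreal (norm (g k) * norm (\<Psi> k))
        \<le> (\<integral>\<^sup>+k'. ennreal (norm (g k) * norm (g k') * K (k - k')) \<partial>lborel)" .
  qed
  also have "\<dots> \<le> ennreal \<kappa> * (\<integral>\<^sup>+k. ennreal ((norm (g k))\<^sup>2) \<partial>lborel)"
    by (rule nn_integral_convolution_form_le) (simp_all add: K_nonneg K_even K_mass)
  finally show ?thesis unfolding \<Psi>_def .
qed

lemma integral_gaussian_plane_wave_cnj_fourier:
  fixes g :: "real \<Rightarrow> complex" and t \<epsilon> k :: real
  assumes e: "\<epsilon> > 0" and [measurable]: "g \<in> borel_measurable borel" and gi: "integrable lborel g"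
  shows "(\<integral>x. complex_of_real (exp (- \<epsilon> * x\<^sup>2)) * ei (t*k*x) * cnj (\<integral>k'. g k' * ei (t*k'*x) \<partial>lborel) \<partial>lborel)
    = (\<integral>k'. complex_of_real (sqrt (pi/\<epsilon>) * exp (- (t\<^sup>2/(4*\<epsilon>)) * (k - k')\<^sup>2)) * cnj (g k') \<partial>lborel)"
proof -
  define G where "G x = exp (- \<epsilon> * x\<^sup>2)" for x
  have [measurable]: "G \<in> borel_measurable borel" unfolding G_def by measurable
  have "(\<integral>x. complex_of_real (G x) * ei (t*k*x) * cnj (\<integral>k'. g k' * ei (t*k'*x) \<partial>lborel) \<partial>lborel)
      = (\<integral>x. (\<integral>k'. cnj (g k') * (complex_of_real (G x) * ei ((t*(k - k'))*x)) \<partial>lborel) \<partial>lborel)"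
  proof (intro Bochner_Integration.integral_cong refl)
    fix x
    have "complex_of_real (G x) * ei (t*k*x) * cnj (\<integral>k'. g k' * ei (t*k'*x) \<partial>lborel)
        = complex_of_real (G x) * ei (t*k*x) * (\<integral>k'. cnj (g k') * ei (- (t*k'*x)) \<partial>lborel)"
      by (simp flip: Bochner_Integration.integral_cnj add: cnj_ei)
    also have "\<dots> = (\<integral>k'. complex_of_real (G x) * ei (t*k*x) * (cnj (g k') * ei (- (t*k'*x))) \<partial>lborel)"
      by simp
    also have "\<dots> = (\<integral>k'. cnj (g k') * (complex_of_real (G x) * ei ((t*(k - k'))*x)) \<partial>lborel)"
      by (intro Bochner_Integration.integral_cong refl) (simp add: ei_mult algebra_simps)
    finally show "complex_of_real (G x) * ei (t*k*x) * cnj (\<integral>k'. g k' * ei (t*k'*x) \<partial>lborel)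
        = (\<integral>k'. cnj (g k') * (complex_of_real (G x) * ei ((t*(k - k'))*x)) \<partial>lborel)" .
  qed
  also have "\<dots> = (\<integral>k'. (\<integral>x. cnj (g k') * (complex_of_real (G x) * ei ((t*(k - k'))*x)) \<partial>lborel) \<partial>lborel)"
    using gaussian_integral(1)[OF e] gi
    by (intro lborel_Fubini_integral_dominated[where q=G and p="\<lambda>k'. norm (g k')"])
       (measurable, auto simp: G_def[abs_def] norm_mult mult.commute)
  also have "\<dots> = (\<integral>k'. complex_of_real (sqrt (pi/\<epsilon>) * exp (- (t\<^sup>2/(4*\<epsilon>)) * (k - k')\<^sup>2)) * cnj (g k') \<partial>lborel)"
    using gaussian_fourier_transform(2)[OF e]
    by (simp only: integral_mult_right_zero G_def)
       (simp add: power_mult_distrib mult.commute)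
  finally show ?thesis unfolding G_def .
qed

lemma gaussian_weighted_fourier_norm_sq:
  fixes g :: "real \<Rightarrow> complex" and t \<epsilon> :: real
  assumes e: "\<epsilon> > 0" and gm[measurable]: "g \<in> borel_measurable borel" and gi: "integrable lborel g"
  defines "K \<equiv> \<lambda>d. sqrt (pi/\<epsilon>) * exp (- (t\<^sup>2/(4*\<epsilon>)) * d\<^sup>2)"
  shows "(\<integral>x. complex_of_real (exp (- \<epsilon> * x\<^sup>2) * (cmod (\<integral>k. g k * ei (t*k*x) \<partial>lborel))\<^sup>2) \<partial>lborel)
    = (\<integral>k. g k * (\<integral>k'. complex_of_real (K (k - k')) * cnj (g k') \<partial>lborel) \<partial>lborel)"
proof -
  define \<Phi> where "\<Phi> x = (\<integral>k. g k * ei (t*k*x) \<partial>lborel)" for x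
  define G where "G x = exp (- \<epsilon> * x\<^sup>2)" for x
  define N where "N = (\<integral>k. norm (g k) \<partial>lborel)"
  have [measurable]: "G \<in> borel_measurable borel" unfolding G_def by measurable
  have [measurable]: "\<Phi> \<in> borel_measurable borel"
  proof -
    have "(\<lambda>x. \<integral>k. g k * ei (t*k*x) \<partial>lborel) \<in> borel_measurable lborel" by measurable
    then show ?thesis unfolding \<Phi>_def by simp
  qed
  have \<Phi>_le: "norm (\<Phi> x) \<le> N" for x
    using integral_norm_bound[of lborel "\<lambda>k. g k * ei (t*k*x)"] by (simp add: \<Phi>_def N_def norm_mult)
  have "(\<integral>x. complex_of_real (G x * (cmod (\<Phi> x))\<^sup>2) \<partial>lborel)
      = (\<integral>x. (\<integral>k. g k * (complex_of_real (G x) * ei (t*k*x) * cnj (\<Phi> x)) \<partial>lborel) \<partial>lborel)"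
  proof (intro Bochner_Integration.integral_cong refl)
    fix x
    have "complex_of_real (G x * (cmod (\<Phi> x))\<^sup>2) = \<Phi> x * (complex_of_real (G x) * cnj (\<Phi> x))"
      by (simp only: of_real_mult complex_norm_square mult_ac)
    also have "\<dots> = (\<integral>k. g k * ei (t*k*x) \<partial>lborel) * (complex_of_real (G x) * cnj (\<Phi> x))"
      unfolding \<Phi>_def ..
    also have "\<dots> = (\<integral>k. g k * ei (t*k*x) * (complex_of_real (G x) * cnj (\<Phi> x)) \<partial>lborel)"
      by (rule integral_mult_left_zero[symmetric])
    also have "\<dots> = (\<integral>k. g k * (complex_of_real (G x) * ei (t*k*x) * cnj (\<Phi> x)) \<partial>lborel)"
      by (simp add: ac_simps)
    finally show "complex_of_real (G x * (cmod (\<Phi> x))\<^sup>2)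
        = (\<integral>k. g k * (complex_of_real (G x) * ei (t*k*x) * cnj (\<Phi> x)) \<partial>lborel)" .
  qed
  also have "\<dots> = (\<integral>k. (\<integral>x. g k * (complex_of_real (G x) * ei (t*k*x) * cnj (\<Phi> x)) \<partial>lborel) \<partial>lborel)"
  proof (rule lborel_Fubini_integral_dominated[where q="\<lambda>x. G x * N" and p="\<lambda>k. norm (g k)"])
    show "norm (g k * (complex_of_real (G x) * ei (t * k * x) * cnj (\<Phi> x))) \<le> norm (g k) * (G x * N)"
      for x k
      using mult_left_mono[OF \<Phi>_le[of x], of "norm (g k) * G x"] by (simp add: norm_mult mult_ac G_def)
  qed (measurable, use gaussian_integral(1)[OF e] gi in \<open>auto simp: G_def[abs_def] N_def\<close>)
  also have "\<dots> = (\<integral>k. g k * (\<integral>k'. complex_of_real (K (k - k')) * cnj (g k') \<partial>lborel) \<partial>lborel)"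
    using integral_gaussian_plane_wave_cnj_fourier[OF e gm gi, of t]
    by (simp only: integral_mult_right_zero \<Phi>_def G_def K_def)
  finally show ?thesis unfolding \<Phi>_def G_def .
qed

lemma fourier_L2_bound_gaussian_weight:
  fixes g :: "real \<Rightarrow> complex" and t \<epsilon> :: real
  assumes t: "t \<noteq> 0" and e: "\<epsilon> > 0"
  and gm[measurable]: "g \<in> borel_measurable borel" and gi: "integrable lborel g"
  shows "(\<integral>\<^sup>+x. ennreal ((cmod (\<integral>k. g k * ei (t*k*x) \<partial>lborel))\<^sup>2 * exp (- \<epsilon> * x\<^sup>2)) \<partial>lborel)
     \<le> ennreal (2*pi/\<bar>t\<bar>) * (\<integral>\<^sup>+k. ennreal ((cmod (g k))\<^sup>2) \<partial>lborel)"
proof -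
  define \<Phi> where "\<Phi> x = (\<integral>k. g k * ei (t*k*x) \<partial>lborel)" for x
  define G where "G x = exp (- \<epsilon> * x\<^sup>2)" for x
  define K where "K d = sqrt (pi/\<epsilon>) * exp (- (t\<^sup>2/(4*\<epsilon>)) * d\<^sup>2)" for d
  have [measurable]: "K \<in> borel_measurable borel" unfolding K_def by measurable
  have [measurable]: "\<Phi> \<in> borel_measurable borel"
  proof -
    have "(\<lambda>x. \<integral>k. g k * ei (t*k*x) \<partial>lborel) \<in> borel_measurable lborel" by measurable
    then show ?thesis unfolding \<Phi>_def by simp
  qed
  have G\<Phi>i: "integrable lborel (\<lambda>x. G x * (cmod (\<Phi> x))\<^sup>2)"
  proof -
    have "norm (\<Phi> x) \<le> (\<integral>k. norm (g k) \<partial>lborel)" for x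
      using integral_norm_bound[of lborel "\<lambda>k. g k * ei (t*k*x)"] by (simp add: \<Phi>_def norm_mult)
    then have "norm ((cmod (\<Phi> x))\<^sup>2) \<le> (\<integral>k. norm (g k) \<partial>lborel)\<^sup>2" for x by (simp add: power_mono)
    then have "integrable lborel (\<lambda>x. (cmod (\<Phi> x))\<^sup>2 * G x)"
      using gaussian_integral(1)[OF e] unfolding G_def
      by (intro integrable_mult_bounded[where B="(\<integral>k. norm (g k) \<partial>lborel)\<^sup>2"]) auto
    then show ?thesis by (simp add: mult.commute)
  qed
  have "(\<integral>\<^sup>+x. ennreal ((cmod (\<Phi> x))\<^sup>2 * G x) \<partial>lborel) = ennreal (\<integral>x. G x * (cmod (\<Phi> x))\<^sup>2 \<partial>lborel)"
    using G\<Phi>i by (subst nn_integral_eq_integral) (auto simp: G_def mult.commute)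
  also have "(\<integral>x. G x * (cmod (\<Phi> x))\<^sup>2 \<partial>lborel)
      = norm (\<integral>k. g k * (\<integral>k'. complex_of_real (K (k - k')) * cnj (g k') \<partial>lborel) \<partial>lborel)"
  proof -
    have "complex_of_real (\<integral>x. G x * (cmod (\<Phi> x))\<^sup>2 \<partial>lborel)
        = (\<integral>k. g k * (\<integral>k'. complex_of_real (K (k - k')) * cnj (g k') \<partial>lborel) \<partial>lborel)"
      using gaussian_weighted_fourier_norm_sq[OF e gm gi, of t]
      unfolding \<Phi>_def G_def K_def by (simp only: integral_complex_of_real)
    moreover have "(\<integral>x. G x * (cmod (\<Phi> x))\<^sup>2 \<partial>lborel) \<ge> 0"
      by (simp add: G_def)
    ultimately show ?thesis by (metis abs_of_nonneg norm_of_real)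
  qed
  also have "\<dots> \<le> ennreal (2*pi/\<bar>t\<bar>) * (\<integral>\<^sup>+k. ennreal ((cmod (g k))\<^sup>2) \<partial>lborel)"
  proof (rule norm_integral_convolution_form_le)
    show "K d \<ge> 0" "K d \<le> sqrt (pi/\<epsilon>)" for d
      unfolding K_def using e by (auto intro: mult_left_le)
    show "K (- d) = K d" for d by (simp add: K_def)
    show "(\<integral>\<^sup>+k'. ennreal (K (k - k')) \<partial>lborel) = ennreal (2*pi/\<bar>t\<bar>)" for k
      unfolding K_def by (rule nn_integral_gaussian_kernel[OF t e])
  qed (simp_all add: gi)
  finally show ?thesis unfolding \<Phi>_def G_def .
qed

lemma fourier_L2_bound:
  fixes g :: "real \<Rightarrow> complex" and t :: real
  assumes t: "t \<noteq> 0"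
  and gm[measurable]: "g \<in> borel_measurable borel" and gi: "integrable lborel g"
  shows "(\<integral>\<^sup>+x. ennreal ((cmod (\<integral>k. g k * ei (t*k*x) \<partial>lborel))\<^sup>2) \<partial>lborel)
     \<le> ennreal (2*pi/\<bar>t\<bar>) * (\<integral>\<^sup>+k. ennreal ((cmod (g k))\<^sup>2) \<partial>lborel)"
proof -
  define \<Phi> where "\<Phi> x = (\<integral>k. g k * ei (t*k*x) \<partial>lborel)" for x
  define B where "B = ennreal (2*pi/\<bar>t\<bar>) * (\<integral>\<^sup>+k. ennreal ((cmod (g k))\<^sup>2) \<partial>lborel)"
  define f where "f n x = ennreal ((cmod (\<Phi> x))\<^sup>2 * exp (- (1 / real (Suc n)) * x\<^sup>2))" for n x
  have [measurable]: "\<Phi> \<in> borel_measurable borel"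
  proof -
    have "(\<lambda>x. \<integral>k. g k * ei (t*k*x) \<partial>lborel) \<in> borel_measurable lborel"
      by measurable
    then show ?thesis unfolding \<Phi>_def by simp
  qed
  have fm: "f n \<in> borel_measurable lborel" for n unfolding f_def by measurable
  have lim: "(\<lambda>n. f n x) \<longlonglongrightarrow> ennreal ((cmod (\<Phi> x))\<^sup>2)" for x
  proof -
    have "(\<lambda>n. 1 / real (Suc n)) \<longlonglongrightarrow> 0"
      using LIMSEQ_inverse_real_of_nat by (simp add: inverse_eq_divide)
    then have "(\<lambda>n. (cmod (\<Phi> x))\<^sup>2 * exp (- (1 / real (Suc n)) * x\<^sup>2)) \<longlonglongrightarrow> (cmod (\<Phi> x))\<^sup>2 * exp (- 0 * x\<^sup>2)"
      by (intro tendsto_intros)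
    then show ?thesis unfolding f_def by (intro tendsto_ennrealI) simp
  qed
  have "(\<integral>\<^sup>+x. ennreal ((cmod (\<Phi> x))\<^sup>2) \<partial>lborel) = (\<integral>\<^sup>+x. liminf (\<lambda>n. f n x) \<partial>lborel)"
    by (intro nn_integral_cong) (simp add: lim_imp_Liminf[OF _ lim])
  also have "\<dots> \<le> liminf (\<lambda>n. integral\<^sup>N lborel (f n))"
    by (rule nn_integral_liminf) (rule fm)
  also have "\<dots> \<le> limsup (\<lambda>n. integral\<^sup>N lborel (f n))"
    by (rule Liminf_le_Limsup) simp
  also have "\<dots> \<le> B"
  proof (rule Limsup_bounded, intro always_eventually allI)
    fix n
    show "integral\<^sup>N lborel (f n) \<le> B"
      unfolding f_def B_def \<Phi>_def
      by (rule fourier_L2_bound_gaussian_weight[OF t _ gm gi]) simp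
  qed
  finally show ?thesis unfolding \<Phi>_def B_def .
qed

lemma fourier_multiplier_L2_bound:
  fixes g m :: "real \<Rightarrow> complex" and t M :: real
  assumes t: "t \<noteq> 0" and [measurable]: "g \<in> borel_measurable borel" and gi: "integrable lborel g"
  and [measurable]: "m \<in> borel_measurable borel" and mb: "\<And>k. norm (m k) \<le> M"
  shows "(\<integral>\<^sup>+x. ennreal ((cmod (\<integral>k. (m k * g k) * ei (t*k*x) \<partial>lborel))\<^sup>2) \<partial>lborel)
     \<le> ennreal (2*pi/\<bar>t\<bar> * M\<^sup>2) * (\<integral>\<^sup>+k. ennreal ((cmod (g k))\<^sup>2) \<partial>lborel)"
proof -
  have mgi: "integrable lborel (\<lambda>k. m k * g k)"
    by (rule integrable_mult_bounded[OF gi _ mb]) measurable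
  have "(\<integral>\<^sup>+x. ennreal ((cmod (\<integral>k. (m k * g k) * ei (t*k*x) \<partial>lborel))\<^sup>2) \<partial>lborel)
     \<le> ennreal (2*pi/\<bar>t\<bar>) * (\<integral>\<^sup>+k. ennreal ((cmod (m k * g k))\<^sup>2) \<partial>lborel)"
    by (rule fourier_L2_bound[OF t _ mgi]) measurable
  also have "(\<integral>\<^sup>+k. ennreal ((cmod (m k * g k))\<^sup>2) \<partial>lborel) \<le> (\<integral>\<^sup>+k. ennreal (M\<^sup>2) * ennreal ((cmod (g k))\<^sup>2) \<partial>lborel)"
  proof (intro nn_integral_mono)
    fix k
    have "(cmod (m k * g k))\<^sup>2 = (cmod (m k))\<^sup>2 * (cmod (g k))\<^sup>2" by (simp add: norm_mult power_mult_distrib)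
    also have "\<dots> \<le> M\<^sup>2 * (cmod (g k))\<^sup>2"
      by (intro mult_right_mono power_mono mb) auto
    finally show "ennreal ((cmod (m k * g k))\<^sup>2) \<le> ennreal (M\<^sup>2) * ennreal ((cmod (g k))\<^sup>2)"
      by (simp add: ennreal_mult[symmetric] ennreal_leI)
  qed
  also have "\<dots> = ennreal (M\<^sup>2) * (\<integral>\<^sup>+k. ennreal ((cmod (g k))\<^sup>2) \<partial>lborel)"
    by (rule nn_integral_cmult) measurable
  finally have "(\<integral>\<^sup>+x. ennreal ((cmod (\<integral>k. (m k * g k) * ei (t*k*x) \<partial>lborel))\<^sup>2) \<partial>lborel)
     \<le> ennreal (2*pi/\<bar>t\<bar>) * (ennreal (M\<^sup>2) * (\<integral>\<^sup>+k. ennreal ((cmod (g k))\<^sup>2) \<partial>lborel))"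
    by (simp add: mult_left_mono)
  moreover have e: "ennreal (2*pi/\<bar>t\<bar> * M\<^sup>2) = ennreal (2*pi/\<bar>t\<bar>) * ennreal (M\<^sup>2)"
    by (rule ennreal_mult) auto
  ultimately show ?thesis unfolding e by (simp only: mult.assoc)
qed

lemma real_distribution_density:
  fixes P :: "real \<Rightarrow> real"
  assumes [measurable]: "P \<in> borel_measurable borel" and P0: "\<And>x. P x \<ge> 0"
  and Pi: "integrable lborel P" and mass: "(\<integral>x. P x \<partial>lborel) = 1"
  shows "real_distribution (density lborel (\<lambda>x. ennreal (P x)))"
proof -
  have "emeasure (density lborel (\<lambda>x. ennreal (P x))) UNIV = (\<integral>\<^sup>+x. ennreal (P x) \<partial>lborel)"
    by (subst emeasure_density) auto
  also have "\<dots> = 1" using Pi P0 mass by (subst nn_integral_eq_integral) auto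
  finally have "prob_space (density lborel (\<lambda>x. ennreal (P x)))"
    by (intro prob_spaceI) simp
  then show ?thesis
    unfolding real_distribution_def real_distribution_axioms_def by simp
qed

lemma char_density:
  fixes P :: "real \<Rightarrow> real"
  assumes [measurable]: "P \<in> borel_measurable borel" and P0: "\<And>x. P x \<ge> 0"
  shows "char (density lborel (\<lambda>x. ennreal (P x))) t = (\<integral>x. complex_of_real (P x) * ei (t * x) \<partial>lborel)"
  unfolding char_def ei_def
  by (subst integral_density) (auto simp: P0 scaleR_conv_of_real)

lemma nonneg_fourier_unique:
  fixes P Q :: "real \<Rightarrow> real"
  assumes [measurable]: "P \<in> borel_measurable borel" "Q \<in> borel_measurable borel"
    and P0: "\<And>x. P x \<ge> 0" and Q0: "\<And>x. Q x \<ge> 0"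
    and Pi: "integrable lborel P" and Qi: "integrable lborel Q"
    and eq: "\<And>\<xi>. (\<integral>x. complex_of_real (P x) * ei (\<xi> * x) \<partial>lborel)
                 = (\<integral>x. complex_of_real (Q x) * ei (\<xi> * x) \<partial>lborel)"
  shows "AE x in lborel. P x = Q x"
proof -
  define m where "m = (\<integral>x. P x \<partial>lborel)"
  have "complex_of_real (\<integral>x. P x \<partial>lborel) = complex_of_real (\<integral>x. Q x \<partial>lborel)"
    using eq[of 0] by simp
  then have mQ: "(\<integral>x. Q x \<partial>lborel) = m" unfolding m_def by simp
  show ?thesis
  proof (cases "m = 0")
    case True
    have "AE x in lborel. P x = 0" "AE x in lborel. Q x = 0"
      using True mQ Pi Qi P0 Q0 unfolding m_def
      by (subst integral_nonneg_eq_0_iff_AE[symmetric]; simp)+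
    then show ?thesis by eventually_elim simp
  next
    case False
    then have m: "m > 0" using P0 unfolding m_def by (simp add: integral_nonneg order_le_neq_trans)
    define M1 where "M1 = density lborel (\<lambda>x. ennreal (P x / m))"
    define M2 where "M2 = density lborel (\<lambda>x. ennreal (Q x / m))"
    have "real_distribution M1" unfolding M1_def
      using Pi m P0 by (intro real_distribution_density) (auto simp: m_def)
    moreover have "real_distribution M2" unfolding M2_def
      using Qi m Q0 mQ by (intro real_distribution_density) auto
    moreover have "char M1 = char M2"
    proof
      fix t
      have "char M1 t = complex_of_real (1/m) * (\<integral>x. complex_of_real (P x) * ei (t * x) \<partial>lborel)"
        unfolding M1_def using m P0
        by (subst char_density) (auto simp flip: integral_mult_right_zero intro!: Bochner_Integration.integral_cong)
      also have "\<dots> = complex_of_real (1/m) * (\<integral>x. complex_of_real (Q x) * ei (t * x) \<partial>lborel)"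
        by (simp only: eq)
      also have "\<dots> = char M2 t"
        unfolding M2_def using m Q0
        by (subst char_density) (auto simp flip: integral_mult_right_zero intro!: Bochner_Integration.integral_cong)
      finally show "char M1 t = char M2 t" .
    qed
    ultimately have "M1 = M2" using Levy_uniqueness by blast
    then have "AE x in lborel. ennreal (P x / m) = ennreal (Q x / m)"
      unfolding M1_def M2_def
      by (subst (asm) sigma_finite_measure.density_unique_iff[OF sigma_finite_lborel]) auto
    then show ?thesis
      by eventually_elim (use m P0 Q0 in \<open>simp add: ennreal_inj divide_nonneg_pos\<close>)
  qed
qed

lemma fourier_unique_real:
  fixes r :: "real \<Rightarrow> real"
  assumes [measurable]: "r \<in> borel_measurable borel" and ri: "integrable lborel r"
  and z: "\<And>\<xi>. (\<integral>x. complex_of_real (r x) * ei (\<xi> * x) \<partial>lborel) = 0"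
  shows "AE x in lborel. r x = 0"
proof -
  define P where "P x = max (r x) 0" for x
  define Q where "Q x = max (- r x) 0" for x
  have [measurable]: "P \<in> borel_measurable borel" "Q \<in> borel_measurable borel"
    unfolding P_def Q_def by measurable
  have rPQ: "r x = P x - Q x" and P0: "P x \<ge> 0" and Q0: "Q x \<ge> 0" for x
    unfolding P_def Q_def by auto
  have Pi: "integrable lborel P" and Qi: "integrable lborel Q"
    unfolding P_def Q_def using ri by (auto intro!: integrable_max)
  have "AE x in lborel. P x = Q x"
  proof (rule nonneg_fourier_unique)
    fix \<xi>
    have "integrable lborel (\<lambda>x. ei (\<xi> * x) * complex_of_real (P x))"
      "integrable lborel (\<lambda>x. ei (\<xi> * x) * complex_of_real (Q x))"
      using Pi Qi by (auto intro!: integrable_mult_bounded[of _ _ _ 1])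
    then have "(\<integral>x. complex_of_real (P x) * ei (\<xi> * x) \<partial>lborel) - (\<integral>x. complex_of_real (Q x) * ei (\<xi> * x) \<partial>lborel)
        = (\<integral>x. complex_of_real (r x) * ei (\<xi> * x) \<partial>lborel)"
      by (simp flip: Bochner_Integration.integral_diff add: rPQ algebra_simps mult.commute)
    then show "(\<integral>x. complex_of_real (P x) * ei (\<xi> * x) \<partial>lborel) = (\<integral>x. complex_of_real (Q x) * ei (\<xi> * x) \<partial>lborel)"
      using z by simp
  qed (simp_all add: Pi Qi P0 Q0)
  then show ?thesis by eventually_elim (simp add: rPQ)
qed

lemma fourier_unique:
  fixes f :: "real \<Rightarrow> complex"
  assumes [measurable]: "f \<in> borel_measurable borel" and fi: "integrable lborel f"
  and z: "\<And>\<xi>. (\<integral>x. f x * ei (\<xi> * x) \<partial>lborel) = 0"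
  shows "AE x in lborel. f x = 0"
proof -
  have i1: "integrable lborel (\<lambda>x. ei (\<xi> * x) * f x)" for \<xi>
    using fi by (intro integrable_mult_bounded[of _ _ _ 1]) auto
  have i2: "integrable lborel (\<lambda>x. ei (\<xi> * x) * cnj (f x))" for \<xi>
    using fi by (intro integrable_mult_bounded[of _ _ _ 1]) auto
  have zc: "(\<integral>x. ei (\<xi> * x) * cnj (f x) \<partial>lborel) = 0" for \<xi>
  proof -
    have "(\<integral>x. ei (\<xi> * x) * cnj (f x) \<partial>lborel) = cnj (\<integral>x. f x * ei ((- \<xi>) * x) \<partial>lborel)"
      by (simp flip: Bochner_Integration.integral_cnj add: cnj_ei mult.commute)
    then show ?thesis using z[of "- \<xi>"] by simp
  qed
  have comb: "(\<integral>x. complex_of_real (r x) * ei (\<xi> * x) \<partial>lborel) = 0"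
    if r: "\<And>x. complex_of_real (r x) = \<alpha> * f x + \<beta> * cnj (f x)" for r \<alpha> \<beta> \<xi>
  proof -
    have "(\<integral>x. complex_of_real (r x) * ei (\<xi> * x) \<partial>lborel)
        = (\<integral>x. \<alpha> * (ei (\<xi> * x) * f x) + \<beta> * (ei (\<xi> * x) * cnj (f x)) \<partial>lborel)"
      by (intro Bochner_Integration.integral_cong refl) (simp add: r algebra_simps)
    also have "\<dots> = \<alpha> * (\<integral>x. ei (\<xi> * x) * f x \<partial>lborel) + \<beta> * (\<integral>x. ei (\<xi> * x) * cnj (f x) \<partial>lborel)"
      using integrable_mult_right[OF i1, of \<alpha>] integrable_mult_right[OF i2, of \<beta>]
      by (simp only: Bochner_Integration.integral_add integral_mult_right_zero)
    finally show ?thesis using z[of \<xi>] zc[of \<xi>] by (simp add: mult.commute)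
  qed
  have "AE x in lborel. Re (f x) = 0"
    using fi by (intro fourier_unique_real comb[of _ "1/2" "1/2"]) (auto simp: complex_eq_iff)
  moreover have "AE x in lborel. Im (f x) = 0"
    using fi by (intro fourier_unique_real comb[of _ "- \<i>/2" "\<i>/2"]) (auto simp: complex_eq_iff)
  ultimately show ?thesis by eventually_elim (simp add: complex_eq_iff)
qed

lemma hFT_measurable [measurable]:
  assumes [measurable]: "u \<in> borel_measurable borel"
  shows "hFT h u \<in> borel_measurable borel"
proof -
  have "(\<lambda>k. (\<integral>y. u y * ei (- k*y/h) \<partial>lborel) / complex_of_real (sqrt (2*pi*h))) \<in> borel_measurable lborel"
    by measurable
  then show ?thesis unfolding hFT_def[abs_def] by simp
qed

lemma hFT_L2_bound:
  fixes u :: "real \<Rightarrow> complex" and h :: real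
  assumes h: "h > 0" and um[measurable]: "u \<in> borel_measurable borel" and ui: "integrable lborel u"
  shows "(\<integral>\<^sup>+k. ennreal ((cmod (hFT h u k))\<^sup>2) \<partial>lborel) \<le> (\<integral>\<^sup>+y. ennreal ((cmod (u y))\<^sup>2) \<partial>lborel)"
proof -
  define c where "c = sqrt (2*pi*h)"
  have c: "c > 0" using h by (simp add: c_def)
  have c2: "c\<^sup>2 = 2*pi*h" using h by (simp add: c_def)
  have t: "- 1/h \<noteq> 0" using h by simp
  have eq: "(cmod (hFT h u k))\<^sup>2 = (1 / c\<^sup>2) * (cmod (\<integral>y. u y * ei ((- 1/h) * y * k) \<partial>lborel))\<^sup>2" for k
  proof -
    have "hFT h u k = (\<integral>y. u y * ei ((- 1/h) * y * k) \<partial>lborel) / complex_of_real c"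
      unfolding hFT_def c_def by (simp add: mult_ac)
    then show ?thesis using c by (simp add: norm_divide power_divide)
  qed
  have "(\<integral>\<^sup>+k. ennreal ((cmod (hFT h u k))\<^sup>2) \<partial>lborel)
      = (\<integral>\<^sup>+k. ennreal (1 / c\<^sup>2) * ennreal ((cmod (\<integral>y. u y * ei ((- 1/h) * y * k) \<partial>lborel))\<^sup>2) \<partial>lborel)"
  proof (intro nn_integral_cong)
    fix k
    show "ennreal ((cmod (hFT h u k))\<^sup>2) = ennreal (1 / c\<^sup>2) * ennreal ((cmod (\<integral>y. u y * ei ((- 1/h) * y * k) \<partial>lborel))\<^sup>2)"
      unfolding eq by (rule ennreal_mult) auto
  qed
  also have "\<dots> = ennreal (1 / c\<^sup>2) * (\<integral>\<^sup>+k. ennreal ((cmod (\<integral>y. u y * ei ((- 1/h) * y * k) \<partial>lborel))\<^sup>2) \<partial>lborel)"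
    by (rule nn_integral_cmult) measurable
  also have "\<dots> \<le> ennreal (1 / c\<^sup>2) * (ennreal (2*pi/\<bar>- 1/h\<bar>) * (\<integral>\<^sup>+y. ennreal ((cmod (u y))\<^sup>2) \<partial>lborel))"
    by (intro mult_left_mono fourier_L2_bound[OF t um ui]) simp
  also have "\<dots> = (\<integral>\<^sup>+y. ennreal ((cmod (u y))\<^sup>2) \<partial>lborel)"
  proof -
    have "(1 / c\<^sup>2) * (2*pi/\<bar>- 1/h\<bar>) = 1" using h c2 c by (simp add: field_simps)
    then have "ennreal (1 / c\<^sup>2) * ennreal (2*pi/\<bar>- 1/h\<bar>) = 1"
      using h by (simp add: ennreal_mult[symmetric])
    then show ?thesis by (simp add: mult.assoc[symmetric])
  qed
  finally show ?thesis .
qed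

lemma hFT_multiplier_L2_bound:
  fixes u m :: "real \<Rightarrow> complex" and h s M :: real
  assumes h: "h > 0" and um[measurable]: "u \<in> borel_measurable borel"
    and ui: "integrable lborel u" and Fi: "integrable lborel (hFT h u)"
    and mm[measurable]: "m \<in> borel_measurable borel" and mb: "\<And>k. norm (m k) \<le> M" and s: "\<bar>s\<bar> = 1/h"
  shows "(\<integral>\<^sup>+x. ennreal ((cmod (\<integral>k. (m k * hFT h u k) * ei (s * k * x) \<partial>lborel))\<^sup>2) \<partial>lborel)
    \<le> ennreal (2*pi*h * M\<^sup>2) * (\<integral>\<^sup>+x. ennreal ((cmod (u x))\<^sup>2) \<partial>lborel)"
proof -
  have "s \<noteq> 0" using s h by auto
  from fourier_multiplier_L2_bound[OF this _ Fi mm mb]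
  have "(\<integral>\<^sup>+x. ennreal ((cmod (\<integral>k. (m k * hFT h u k) * ei (s * k * x) \<partial>lborel))\<^sup>2) \<partial>lborel)
      \<le> ennreal (2*pi*h * M\<^sup>2) * (\<integral>\<^sup>+k. ennreal ((cmod (hFT h u k))\<^sup>2) \<partial>lborel)"
    using s by simp
  also have "\<dots> \<le> ennreal (2*pi*h * M\<^sup>2) * (\<integral>\<^sup>+x. ennreal ((cmod (u x))\<^sup>2) \<partial>lborel)"
    by (intro mult_left_mono hFT_L2_bound[OF h um ui]) simp_all
  finally show ?thesis .
qed

lemma integral_fourier_integral_gaussian_modulated:
  fixes F :: "real \<Rightarrow> complex" and s \<xi> :: real
  assumes [measurable]: "F \<in> borel_measurable borel" and Fi: "integrable lborel F"
  shows "(\<integral>x. (\<integral>k. F k * ei (s*k*x) \<partial>lborel) * (complex_of_real (exp (- x\<^sup>2)) * ei (\<xi> * x)) \<partial>lborel)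
    = (\<integral>k. F k * complex_of_real (sqrt pi * exp (- (\<xi> + s*k)\<^sup>2 / 4)) \<partial>lborel)"
proof -
  define G where "G x = exp (- x\<^sup>2)" for x :: real
  have G0: "G x \<ge> 0" for x by (simp add: G_def)
  have Gi: "integrable lborel G" unfolding G_def using gaussian_integral(1)[of 1] by simp
  have [measurable]: "G \<in> borel_measurable borel" unfolding G_def by measurable
  have "(\<integral>x. (\<integral>k. F k * ei (s*k*x) \<partial>lborel) * (complex_of_real (G x) * ei (\<xi> * x)) \<partial>lborel)
      = (\<integral>x. (\<integral>k. F k * (complex_of_real (G x) * ei ((\<xi> + s*k) * x)) \<partial>lborel) \<partial>lborel)"
  proof (intro Bochner_Integration.integral_cong refl)
    fix x
    have "(\<integral>k. F k * ei (s*k*x) \<partial>lborel) * (complex_of_real (G x) * ei (\<xi> * x))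
        = (\<integral>k. F k * ei (s*k*x) * (complex_of_real (G x) * ei (\<xi> * x)) \<partial>lborel)"
      by (rule integral_mult_left_zero[symmetric])
    also have "\<dots> = (\<integral>k. F k * (complex_of_real (G x) * ei ((\<xi> + s*k) * x)) \<partial>lborel)"
      by (intro Bochner_Integration.integral_cong refl) (simp add: ei_mult algebra_simps)
    finally show "(\<integral>k. F k * ei (s*k*x) \<partial>lborel) * (complex_of_real (G x) * ei (\<xi> * x))
        = (\<integral>k. F k * (complex_of_real (G x) * ei ((\<xi> + s*k) * x)) \<partial>lborel)" .
  qed
  also have "\<dots> = (\<integral>k. (\<integral>x. F k * (complex_of_real (G x) * ei ((\<xi> + s*k) * x)) \<partial>lborel) \<partial>lborel)"
    by (rule lborel_Fubini_integral_dominated[where p="\<lambda>k. norm (F k)" and q=G])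
       (measurable, auto simp: Fi Gi G0 norm_mult)
  also have "\<dots> = (\<integral>k. F k * complex_of_real (sqrt pi * exp (- (\<xi> + s*k)\<^sup>2 / 4)) \<partial>lborel)"
    using gaussian_fourier_transform(2)[of 1]
    by (simp only: integral_mult_right_zero) (simp add: G_def)
  finally show ?thesis unfolding G_def .
qed

lemma integral_plane_wave_shifted_gaussian:
  fixes h \<xi> y :: real
  assumes h: "h > 0"
  shows "(\<integral>k. ei (- k*y/h) * complex_of_real (sqrt pi * exp (- (\<xi> + k/h)\<^sup>2 / 4)) \<partial>lborel)
    = complex_of_real (2*pi*h * exp (- y\<^sup>2)) * ei (\<xi> * y)"
proof -
  let ?f = "\<lambda>k. ei (- k*y/h) * complex_of_real (sqrt pi * exp (- (\<xi> + k/h)\<^sup>2 / 4))"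
  have "(\<integral>k. ?f k \<partial>lborel) = \<bar>h\<bar> *\<^sub>R (\<integral>s. ?f (- h * \<xi> + h * s) \<partial>lborel)"
    using h by (intro lborel_integral_real_affine) simp
  also have "(\<integral>s. ?f (- h * \<xi> + h * s) \<partial>lborel)
      = (\<integral>s. (ei (\<xi> * y) * complex_of_real (sqrt pi))
              * (complex_of_real (exp (- (1/4) * s\<^sup>2)) * ei ((- y) * s)) \<partial>lborel)"
  proof (intro Bochner_Integration.integral_cong refl)
    fix s
    have a2: "\<xi> + (- h * \<xi> + h * s) / h = s" using h by (simp add: field_simps)
    have a1: "- (- h * \<xi> + h * s) * y / h = \<xi> * y + (- y) * s" using h by (simp add: field_simps)
    show "?f (- h * \<xi> + h * s)
        = (ei (\<xi> * y) * complex_of_real (sqrt pi)) * (complex_of_real (exp (- (1/4) * s\<^sup>2)) * ei ((- y) * s))"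
      unfolding a1 a2 ei_mult[symmetric] by (simp add: mult_ac)
  qed
  also have "\<dots> = (ei (\<xi> * y) * complex_of_real (sqrt pi)) * complex_of_real (2 * sqrt pi * exp (- y\<^sup>2))"
    using gaussian_fourier_transform(2)[of "1/4" "- y"]
    by (subst integral_mult_right_zero) (simp add: real_sqrt_mult)
  finally show ?thesis
    using h by (simp add: scaleR_conv_of_real mult_ac flip: of_real_mult)
qed

lemma integral_fourier_times_shifted_gaussian:
  fixes u :: "real \<Rightarrow> complex" and h \<xi> :: real
  assumes h: "h > 0" and [measurable]: "u \<in> borel_measurable borel" and ui: "integrable lborel u"
  shows "(\<integral>k. (\<integral>y. u y * ei (- k*y/h) \<partial>lborel) * complex_of_real (sqrt pi * exp (- (\<xi> + k/h)\<^sup>2 / 4)) \<partial>lborel)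
    = complex_of_real (2*pi*h) * (\<integral>y. u y * (complex_of_real (exp (- y\<^sup>2)) * ei (\<xi> * y)) \<partial>lborel)"
proof -
  define g where "g k = sqrt pi * exp (- (\<xi> + k/h)\<^sup>2 / 4)" for k
  have g0: "g k \<ge> 0" for k by (simp add: g_def)
  have [measurable]: "g \<in> borel_measurable borel" unfolding g_def by measurable
  have gi: "integrable lborel g"
  proof -
    have "integrable lborel (\<lambda>s. sqrt pi * exp (- (1/4) * s\<^sup>2))"
      using gaussian_integral(1)[of "1/4"] by simp
    then have "integrable lborel (\<lambda>k. sqrt pi * exp (- (1/4) * (\<xi> + (1/h) * k)\<^sup>2))"
      using h by (intro lborel_integrable_real_affine) auto
    then show ?thesis unfolding g_def by simp
  qed
  have "(\<integral>k. (\<integral>y. u y * ei (- k*y/h) \<partial>lborel) * complex_of_real (g k) \<partial>lborel)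
      = (\<integral>k. (\<integral>y. u y * (ei (- k*y/h) * complex_of_real (g k)) \<partial>lborel) \<partial>lborel)"
    by (simp flip: integral_mult_left_zero add: mult.assoc)
  also have "\<dots> = (\<integral>y. (\<integral>k. u y * (ei (- k*y/h) * complex_of_real (g k)) \<partial>lborel) \<partial>lborel)"
    by (rule lborel_Fubini_integral_dominated[where p="\<lambda>y. norm (u y)" and q=g])
       (measurable, auto simp: ui gi g0 norm_mult)
  also have "\<dots> = (\<integral>y. u y * (complex_of_real (2*pi*h * exp (- y\<^sup>2)) * ei (\<xi> * y)) \<partial>lborel)"
    by (simp only: integral_mult_right_zero g_def integral_plane_wave_shifted_gaussian[OF h])
  also have "\<dots> = (\<integral>y. complex_of_real (2*pi*h) * (u y * (complex_of_real (exp (- y\<^sup>2)) * ei (\<xi> * y))) \<partial>lborel)"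
    by (intro Bochner_Integration.integral_cong refl) (simp add: mult_ac)
  finally show ?thesis unfolding g_def by simp
qed

lemma inverse_hFT_gaussian_pairing:
  fixes u :: "real \<Rightarrow> complex" and h \<xi> :: real
  assumes h: "h > 0" and um[measurable]: "u \<in> borel_measurable borel"
  and ui: "integrable lborel u" and Fi: "integrable lborel (hFT h u)"
  shows "(\<integral>x. (\<integral>k. hFT h u k * ei (1/h*k*x) \<partial>lborel) / complex_of_real (sqrt (2*pi*h))
              * (complex_of_real (exp (- x\<^sup>2)) * ei (\<xi> * x)) \<partial>lborel)
    = (\<integral>x. u x * (complex_of_real (exp (- x\<^sup>2)) * ei (\<xi> * x)) \<partial>lborel)"
proof -
  define c where "c = sqrt (2*pi*h)"
  have c2: "complex_of_real c * complex_of_real c = complex_of_real (2*pi*h)"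
    using h by (simp add: c_def flip: of_real_mult)
  have "(\<integral>x. (\<integral>k. hFT h u k * ei (1/h*k*x) \<partial>lborel) / complex_of_real c
              * (complex_of_real (exp (- x\<^sup>2)) * ei (\<xi> * x)) \<partial>lborel)
      = (\<integral>k. hFT h u k * complex_of_real (sqrt pi * exp (- (\<xi> + k/h)\<^sup>2 / 4)) \<partial>lborel) / complex_of_real c"
    using integral_fourier_integral_gaussian_modulated[OF _ Fi, of "1/h" \<xi>] by simp
  also have "\<dots> = complex_of_real (2*pi*h) * (\<integral>x. u x * (complex_of_real (exp (- x\<^sup>2)) * ei (\<xi> * x)) \<partial>lborel)
      / (complex_of_real c * complex_of_real c)"
    using integral_fourier_times_shifted_gaussian[OF h um ui, of \<xi>]
    by (simp add: hFT_def c_def)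
  also have "\<dots> = (\<integral>x. u x * (complex_of_real (exp (- x\<^sup>2)) * ei (\<xi> * x)) \<partial>lborel)"
    using h by (simp add: c2)
  finally show ?thesis unfolding c_def .
qed

lemma hFT_inversion:
  fixes u :: "real \<Rightarrow> complex" and h :: real
  assumes h: "h > 0" and um[measurable]: "u \<in> borel_measurable borel"
  and ui: "integrable lborel u" and Fi: "integrable lborel (hFT h u)"
  shows "AE x in lborel. (\<integral>k. hFT h u k * ei (k*x/h) \<partial>lborel) / complex_of_real (sqrt (2*pi*h)) = u x"
proof -
  define v where "v x = (\<integral>k. hFT h u k * ei (1/h*k*x) \<partial>lborel) / complex_of_real (sqrt (2*pi*h))" for x
  have [measurable]: "v \<in> borel_measurable borel"
  proof -
    have "(\<lambda>x. (\<integral>k. hFT h u k * ei (1/h*k*x) \<partial>lborel) / complex_of_real (sqrt (2*pi*h)))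
        \<in> borel_measurable lborel"
      by measurable
    then show ?thesis unfolding v_def[abs_def] by simp
  qed
  have v_le: "norm (v x) \<le> (\<integral>k. norm (hFT h u k) \<partial>lborel) / sqrt (2*pi*h)" for x
    using integral_norm_bound[of lborel "\<lambda>k. hFT h u k * ei (1/h*k*x)"] h
    by (simp add: v_def norm_divide norm_mult divide_right_mono)
  define E where "E \<xi> x = complex_of_real (exp (- x\<^sup>2)) * ei (\<xi> * x)" for \<xi> x
  have [measurable]: "E \<xi> \<in> borel_measurable borel" for \<xi> unfolding E_def by measurable
  have Ei: "integrable lborel (E \<xi>)" for \<xi>
    using integrable_mult_bounded[OF gaussian_fourier_transform(1)[of 1 0], of "\<lambda>x. ei (\<xi> * x)" 1]
    by (simp add: E_def[abs_def] mult.commute)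
  have vEi: "integrable lborel (\<lambda>x. v x * E \<xi> x)" for \<xi>
    using v_le by (intro integrable_mult_bounded[OF Ei]) auto
  have uEi: "integrable lborel (\<lambda>x. u x * E \<xi> x)" for \<xi>
  proof -
    have "integrable lborel (\<lambda>x. E \<xi> x * u x)"
      by (intro integrable_mult_bounded[OF ui, of _ 1]) (auto simp: E_def norm_mult)
    then show ?thesis by (simp add: mult.commute)
  qed
  define w where "w x = (v x - u x) * complex_of_real (exp (- x\<^sup>2))" for x
  have [measurable]: "w \<in> borel_measurable borel" unfolding w_def by measurable
  have "AE x in lborel. w x = 0"
  proof (rule fourier_unique)
    have "integrable lborel (\<lambda>x. v x * E 0 x - u x * E 0 x)"
      using vEi uEi by (rule Bochner_Integration.integrable_diff)
    then show "integrable lborel w"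
      unfolding w_def[abs_def] E_def by (simp add: algebra_simps)
    show "(\<integral>x. w x * ei (\<xi> * x) \<partial>lborel) = 0" for \<xi>
    proof -
      have "(\<integral>x. w x * ei (\<xi> * x) \<partial>lborel) = (\<integral>x. v x * E \<xi> x - u x * E \<xi> x \<partial>lborel)"
        unfolding w_def E_def by (intro Bochner_Integration.integral_cong refl) (simp add: algebra_simps)
      also have "\<dots> = 0"
        using vEi uEi inverse_hFT_gaussian_pairing[OF h um ui Fi, of \<xi>] by (simp add: v_def E_def)
      finally show ?thesis .
    qed
  qed simp
  then show ?thesis
    by eventually_elim (simp add: w_def v_def mult.commute)
qed

lemma norm_exp_minus_1_le:
  fixes z :: complex assumes "norm z \<le> 1"
  shows "norm (exp z - 1) \<le> 3 * norm z"
proof -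
  have "norm (exp z - 1) \<le> exp (norm z) * norm z"
    using Taylor_exp_field[of z 0] by simp
  also have "exp (norm z) \<le> 3"
  proof -
    have "exp (norm z) \<le> exp 1" using assms by simp
    then show ?thesis using exp_le by linarith
  qed
  then have "exp (norm z) * norm z \<le> 3 * norm z"
    by (intro mult_right_mono) auto
  finally show ?thesis .
qed

lemma cp_cm_bounds:
  fixes \<theta> :: complex assumes th: "norm \<theta> \<le> 1/16"
  shows "norm (cp \<theta> - 2) \<le> 6 * norm \<theta>" "norm (cm \<theta>) \<le> 6 * norm \<theta>"
    "norm (cp \<theta>) \<le> 3" "norm (cp \<theta>) \<ge> 3/2" "norm (cm \<theta>) \<le> 1/2"
proof -
  have e1: "norm (exp (\<theta>/2) - 1) \<le> 3 * norm (\<theta>/2)"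
    using th by (intro norm_exp_minus_1_le) (simp add: norm_divide)
  have e2: "norm (exp (3/2*\<theta>) - 1) \<le> 3 * norm (3/2*\<theta>)"
    using th by (intro norm_exp_minus_1_le) (simp add: norm_mult)
  have n1: "norm (\<theta>/2) = norm \<theta> / 2" by (simp add: norm_divide)
  have n2: "norm (3/2*\<theta>) = 3/2 * norm \<theta>" by (simp add: norm_mult)
  have "cp \<theta> - 2 = (exp (\<theta>/2) - 1) + (exp (3/2*\<theta>) - 1)" by (simp add: cp_def)
  then have "norm (cp \<theta> - 2) \<le> norm (exp (\<theta>/2) - 1) + norm (exp (3/2*\<theta>) - 1)"
    using norm_triangle_ineq[of "exp (\<theta>/2) - 1" "exp (3/2*\<theta>) - 1"] by simp
  also have "\<dots> \<le> 6 * norm \<theta>" using e1 e2 n1 n2 by simp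
  finally show a: "norm (cp \<theta> - 2) \<le> 6 * norm \<theta>" .
  have "cm \<theta> = (exp (\<theta>/2) - 1) - (exp (3/2*\<theta>) - 1)" by (simp add: cm_def)
  then have "norm (cm \<theta>) \<le> norm (exp (\<theta>/2) - 1) + norm (exp (3/2*\<theta>) - 1)"
    using norm_triangle_ineq4[of "exp (\<theta>/2) - 1" "exp (3/2*\<theta>) - 1"] by simp
  also have "\<dots> \<le> 6 * norm \<theta>" using e1 e2 n1 n2 by simp
  finally show b: "norm (cm \<theta>) \<le> 6 * norm \<theta>" .
  show "norm (cm \<theta>) \<le> 1/2" using b th by simp
  have "norm (cp \<theta>) \<le> norm (cp \<theta> - 2) + norm (2::complex)"
    using norm_triangle_ineq[of "cp \<theta> - 2" 2] by simp
  then show "norm (cp \<theta>) \<le> 3" using a th by simp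
  have "norm (2::complex) \<le> norm (cp \<theta>) + norm (cp \<theta> - 2)"
    using norm_triangle_ineq4[of "cp \<theta>" "cp \<theta> - 2"] by simp
  then show "norm (cp \<theta>) \<ge> 3/2" using a th by simp
qed

lemma norm_dd_ge:
  fixes \<theta> :: complex assumes th: "norm \<theta> \<le> 1/16"
  shows "norm (dd a b h \<theta> k) \<ge> 2"
proof -
  note cb = cp_cm_bounds[OF th]
  have "norm ((cp \<theta>)^2 * ei (- k*(b-a)/h)) \<le> norm (dd a b h \<theta> k) + norm ((cm \<theta>)^2 * ei (k*(b-a)/h))"
    unfolding dd_def
    using norm_triangle_ineq[of "(cp \<theta>)^2 * ei (- k*(b-a)/h) - (cm \<theta>)^2 * ei (k*(b-a)/h)" "(cm \<theta>)^2 * ei (k*(b-a)/h)"]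
    by simp
  moreover have "norm ((cp \<theta>)^2 * ei (- k*(b-a)/h)) = (norm (cp \<theta>))^2"
    by (simp add: norm_mult norm_power)
  moreover have "norm ((cm \<theta>)^2 * ei (k*(b-a)/h)) = (norm (cm \<theta>))^2"
    by (simp add: norm_mult norm_power)
  moreover have "(norm (cp \<theta>))^2 \<ge> (3/2)^2"
    using cb(4) by (intro power_mono) auto
  moreover have "(norm (cm \<theta>))^2 \<le> (1/2)^2"
    using cb(5) by (intro power_mono) auto
  ultimately show ?thesis by (simp add: power2_eq_square)
qed

lemma norm_divide_le_of_norm_ge_2:
  fixes X d :: complex
  assumes "norm d \<ge> 2" "norm X \<le> 2 * c"
  shows "norm (X / d) \<le> c"
proof -
  have c: "c \<ge> 0" using assms(2) norm_ge_zero[of X] by linarith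
  have "norm (X / d) = norm X / norm d" by (simp add: norm_divide)
  also have "\<dots> \<le> (2 * c) / 2"
    using assms c by (intro frac_le) auto
  finally show ?thesis by simp
qed

lemma norm_AA_minus_1_le:
  fixes \<theta> :: complex assumes th: "norm \<theta> \<le> 1/16"
  shows "norm (AA a b h \<theta> k - 1) \<le> 20 * norm \<theta>"
proof -
  note cb = cp_cm_bounds[OF th]
  define E1 where "E1 = ei (- k*(b-a)/h)"
  define E2 where "E2 = ei (k*(b-a)/h)"
  define d where "d = dd a b h \<theta> k"
  have d2: "norm d \<ge> 2" unfolding d_def by (rule norm_dd_ge[OF th])
  then have dnz: "d \<noteq> 0" by auto
  have dE: "d = (cp \<theta>)^2 * E1 - (cm \<theta>)^2 * E2" unfolding d_def dd_def E1_def E2_def ..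
  have eq: "AA a b h \<theta> k - 1 = (cp \<theta> * (2 - cp \<theta>) * E1 + (cm \<theta>)^2 * E2) / d"
  proof -
    have "AA a b h \<theta> k = 2 * cp \<theta> * E1 / d" unfolding AA_def E1_def d_def ..
    then have "AA a b h \<theta> k - 1 = (2 * cp \<theta> * E1 - d) / d" using dnz by (simp add: field_simps)
    also have "2 * cp \<theta> * E1 - d = cp \<theta> * (2 - cp \<theta>) * E1 + (cm \<theta>)^2 * E2"
      unfolding dE by (simp add: algebra_simps power2_eq_square)
    finally show ?thesis .
  qed
  have "norm (cp \<theta> * (2 - cp \<theta>) * E1 + (cm \<theta>)^2 * E2) \<le> norm (cp \<theta>) * norm (2 - cp \<theta>) + norm (cm \<theta>) * norm (cm \<theta>)"
    using norm_triangle_ineq[of "cp \<theta> * (2 - cp \<theta>) * E1" "(cm \<theta>)^2 * E2"]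
    by (simp add: norm_mult norm_power E1_def E2_def power2_eq_square)
  also have "\<dots> \<le> 3 * (6 * norm \<theta>) + (1/2) * (6 * norm \<theta>)"
  proof (intro add_mono mult_mono)
    show "norm (2 - cp \<theta>) \<le> 6 * norm \<theta>" using cb(1) by (simp add: norm_minus_commute)
  qed (use cb in auto)
  also have "\<dots> \<le> 2 * (20 * norm \<theta>)" by simp
  finally show ?thesis unfolding eq by (rule norm_divide_le_of_norm_ge_2[OF d2])
qed

lemma norm_TT_minus_1_le:
  fixes \<theta> :: complex assumes th: "norm \<theta> \<le> 1/16"
  shows "norm (TT a b h \<theta> k - 1) \<le> 20 * norm \<theta>"
proof -
  note cb = cp_cm_bounds[OF th]
  define E1 where "E1 = ei (- k*(b-a)/h)"
  define E2 where "E2 = ei (k*(b-a)/h)"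
  define d where "d = dd a b h \<theta> k"
  have d2: "norm d \<ge> 2" unfolding d_def by (rule norm_dd_ge[OF th])
  then have dnz: "d \<noteq> 0" by auto
  have dE: "d = (cp \<theta>)^2 * E1 - (cm \<theta>)^2 * E2" unfolding d_def dd_def E1_def E2_def ..
  have eq: "TT a b h \<theta> k - 1 = ((cm \<theta>)^2 * E2 - (cm \<theta>)^2 * E1) / d"
  proof -
    have "TT a b h \<theta> k = E1 * ((cp \<theta>)^2 - (cm \<theta>)^2) / d" unfolding TT_def E1_def d_def ..
    then have "TT a b h \<theta> k - 1 = (E1 * ((cp \<theta>)^2 - (cm \<theta>)^2) - d) / d" using dnz by (simp add: field_simps)
    also have "E1 * ((cp \<theta>)^2 - (cm \<theta>)^2) - d = (cm \<theta>)^2 * E2 - (cm \<theta>)^2 * E1"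
      unfolding dE by (simp add: algebra_simps)
    finally show ?thesis .
  qed
  have "norm ((cm \<theta>)^2 * E2 - (cm \<theta>)^2 * E1) \<le> norm (cm \<theta>) * norm (cm \<theta>) + norm (cm \<theta>) * norm (cm \<theta>)"
    using norm_triangle_ineq4[of "(cm \<theta>)^2 * E2" "(cm \<theta>)^2 * E1"]
    by (simp add: norm_mult norm_power E1_def E2_def power2_eq_square)
  also have "\<dots> \<le> (1/2) * (6 * norm \<theta>) + (1/2) * (6 * norm \<theta>)"
    by (intro add_mono mult_mono) (use cb in auto)
  also have "\<dots> \<le> 2 * (20 * norm \<theta>)" by simp
  finally show ?thesis unfolding eq by (rule norm_divide_le_of_norm_ge_2[OF d2])
qed

lemma norm_BB_le:
  fixes \<theta> :: complex assumes th: "norm \<theta> \<le> 1/16"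
  shows "norm (BB a b h \<theta> k) \<le> 20 * norm \<theta>"
proof -
  note cb = cp_cm_bounds[OF th]
  have d2: "norm (dd a b h \<theta> k) \<ge> 2" by (rule norm_dd_ge[OF th])
  have "norm (- 2 * cm \<theta> * ei (2*k*a/h) * ei (k*(b-a)/h)) = 2 * norm (cm \<theta>)"
    by (simp add: norm_mult)
  also have "\<dots> \<le> 2 * (20 * norm \<theta>)" using cb(2) norm_ge_zero[of \<theta>] by linarith
  finally show ?thesis unfolding BB_def by (rule norm_divide_le_of_norm_ge_2[OF d2])
qed

lemma norm_RR_le:
  fixes \<theta> :: complex assumes th: "norm \<theta> \<le> 1/16"
  shows "norm (RR a b h \<theta> k) \<le> 20 * norm \<theta>"
proof -
  note cb = cp_cm_bounds[OF th]
  have d2: "norm (dd a b h \<theta> k) \<ge> 2" by (rule norm_dd_ge[OF th])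
  have "norm (- 2 * \<i> * cp \<theta> * cm \<theta> * ei (2*k*a/h) * of_real (sin (k*(b-a)/h)))
      = 2 * norm (cp \<theta>) * norm (cm \<theta>) * \<bar>sin (k*(b-a)/h)\<bar>"
    by (simp add: norm_mult)
  also have "\<dots> \<le> 2 * 3 * (6 * norm \<theta>) * 1"
    by (intro mult_mono) (use cb in auto)
  also have "\<dots> \<le> 2 * (20 * norm \<theta>)" by simp
  finally show ?thesis unfolding RR_def by (rule norm_divide_le_of_norm_ge_2[OF d2])
qed

definition region :: "real \<Rightarrow> real \<Rightarrow> real \<Rightarrow> nat" where
  "region a b x = (if x < a then 0 else if x < b then 1 else 2)"

definition psi_alpha :: "real \<Rightarrow> real \<Rightarrow> real \<Rightarrow> complex \<Rightarrow> nat \<Rightarrow> real \<Rightarrow> complex" where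
  "psi_alpha a b h \<theta> j k = (if k > 0 then
      (if j = 0 then 0 else if j = 1 then AA a b h \<theta> k - 1 else TT a b h \<theta> k - 1)
    else (if j = 0 then TT a b h \<theta> (-k) - 1 else if j = 1 then AA a b h \<theta> (-k) - 1 else 0))"

definition psi_beta :: "real \<Rightarrow> real \<Rightarrow> real \<Rightarrow> complex \<Rightarrow> nat \<Rightarrow> real \<Rightarrow> complex" where
  "psi_beta a b h \<theta> j k = (if k > 0 then
      (if j = 0 then RR a b h \<theta> k else if j = 1 then BB a b h \<theta> k else 0)
    else (if j = 0 then 0 else if j = 1 then ei (4*k*a/h) * ei (2*k*(b-a)/h) * BB a b h \<theta> (-k)
          else ei (4*k*a/h) * ei (2*k*(b-a)/h) * RR a b h \<theta> (-k)))"

lemma region_measurable [measurable]: "region a b \<in> borel \<rightarrow>\<^sub>M count_space UNIV"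
  unfolding region_def by measurable

lemma psi_eq_plane_wave_plus_correction:
  "psi a b h \<theta> k x = ei (k*x/h) + psi_alpha a b h \<theta> (region a b x) k * ei (k*x/h)
      + psi_beta a b h \<theta> (region a b x) k * ei (- k*x/h)"
  unfolding psi_def psi_alpha_def psi_beta_def region_def Let_def
  by (simp add: algebra_simps)

lemma norm_psi_alpha_le:
  fixes \<theta> :: complex assumes th: "norm \<theta> \<le> 1/16"
  shows "norm (psi_alpha a b h \<theta> j k) \<le> 20 * norm \<theta>"
  unfolding psi_alpha_def using norm_AA_minus_1_le[OF th] norm_TT_minus_1_le[OF th] by auto

lemma norm_psi_beta_le:
  fixes \<theta> :: complex assumes th: "norm \<theta> \<le> 1/16"
  shows "norm (psi_beta a b h \<theta> j k) \<le> 20 * norm \<theta>"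
  unfolding psi_beta_def using norm_BB_le[OF th] norm_RR_le[OF th] by (auto simp: norm_mult)

lemma psi_alpha_measurable [measurable]: "psi_alpha a b h \<theta> j \<in> borel_measurable borel"
  unfolding psi_alpha_def AA_def TT_def dd_def by measurable

lemma psi_beta_measurable [measurable]: "psi_beta a b h \<theta> j \<in> borel_measurable borel"
  unfolding psi_beta_def BB_def RR_def dd_def by measurable

lemma nn_integral_piecewise_sum_sq_le:
  fixes P Q :: "nat \<Rightarrow> real \<Rightarrow> complex" and r :: "real \<Rightarrow> nat"
  assumes [measurable]: "\<And>j. P j \<in> borel_measurable borel" "\<And>j. Q j \<in> borel_measurable borel"
    and r: "\<And>x. r x < n"
    and P_L2: "\<And>j. j < n \<Longrightarrow> (\<integral>\<^sup>+x. ennreal ((cmod (P j x))\<^sup>2) \<partial>lborel) \<le> B"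
    and Q_L2: "\<And>j. j < n \<Longrightarrow> (\<integral>\<^sup>+x. ennreal ((cmod (Q j x))\<^sup>2) \<partial>lborel) \<le> B"
  shows "(\<integral>\<^sup>+x. ennreal ((cmod (P (r x) x + Q (r x) x))\<^sup>2) \<partial>lborel) \<le> 4 * of_nat n * B"
proof -
  define S where "S x = (\<Sum>j<n. ennreal ((cmod (P j x))\<^sup>2) + ennreal ((cmod (Q j x))\<^sup>2))" for x
  have pointwise: "ennreal ((cmod (P (r x) x + Q (r x) x))\<^sup>2) \<le> 2 * S x" for x
  proof -
    have "(cmod (P (r x) x + Q (r x) x))\<^sup>2 \<le> (cmod (P (r x) x) + cmod (Q (r x) x))\<^sup>2"
      by (intro power_mono norm_triangle_ineq) simp
    also have "\<dots> \<le> 2 * ((cmod (P (r x) x))\<^sup>2 + (cmod (Q (r x) x))\<^sup>2)"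
      using sum_squares_bound[of "cmod (P (r x) x)" "cmod (Q (r x) x)"] by (simp add: power2_sum)
    finally have "ennreal ((cmod (P (r x) x + Q (r x) x))\<^sup>2)
        \<le> ennreal (2 * ((cmod (P (r x) x))\<^sup>2 + (cmod (Q (r x) x))\<^sup>2))"
      by (rule ennreal_leI)
    also have "\<dots> = 2 * (ennreal ((cmod (P (r x) x))\<^sup>2) + ennreal ((cmod (Q (r x) x))\<^sup>2))"
      by (simp add: ennreal_mult')
    also have "\<dots> \<le> 2 * S x"
      unfolding S_def using r[of x] by (intro mult_left_mono member_le_sum) auto
    finally show ?thesis .
  qed
  have "(\<integral>\<^sup>+x. ennreal ((cmod (P (r x) x + Q (r x) x))\<^sup>2) \<partial>lborel) \<le> (\<integral>\<^sup>+x. 2 * S x \<partial>lborel)"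
    by (intro nn_integral_mono pointwise)
  also have "\<dots> = 2 * (\<Sum>j<n. (\<integral>\<^sup>+x. ennreal ((cmod (P j x))\<^sup>2) \<partial>lborel) + (\<integral>\<^sup>+x. ennreal ((cmod (Q j x))\<^sup>2) \<partial>lborel))"
    unfolding S_def by (simp add: nn_integral_cmult nn_integral_sum nn_integral_add)
  also have "\<dots> \<le> 2 * (\<Sum>j<n. B + B)"
    by (intro mult_left_mono sum_mono add_mono P_L2 Q_L2) auto
  also have "\<dots> = 4 * of_nat n * B"
    by (simp add: algebra_simps flip: mult_2)
  finally show ?thesis .
qed

lemma psi_measurable [measurable]: "(\<lambda>(k, x). psi a b h \<theta> k x) \<in> borel_measurable (lborel \<Otimes>\<^sub>M lborel)"
  unfolding psi_def Let_def AA_def BB_def TT_def RR_def dd_def by measurable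

lemma Wop_measurable [measurable]:
  assumes [measurable]: "u \<in> borel_measurable borel"
  shows "Wop a b h \<theta> u \<in> borel_measurable borel"
proof -
  have [measurable]: "(\<lambda>(x, k). psi a b h \<theta> k x) \<in> borel_measurable (lborel \<Otimes>\<^sub>M lborel)"
    using measurable_pair_swap[OF psi_measurable] by (simp add: split_beta)
  have "(\<lambda>x. (\<integral>k. psi a b h \<theta> k x * hFT h u k \<partial>lborel) / complex_of_real (sqrt (2*pi*h)))
      \<in> borel_measurable lborel"
    by measurable
  then show ?thesis unfolding Wop_def[abs_def] by simp
qed

lemma Wop_minus_id_ae_eq:
  fixes a b h :: real and \<theta> :: complex and u :: "real \<Rightarrow> complex"
  assumes h: "h > 0" and th: "norm \<theta> \<le> 1/16" and um[measurable]: "u \<in> borel_measurable borel"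
    and ui: "integrable lborel u" and Fi: "integrable lborel (hFT h u)"
  defines "P \<equiv> \<lambda>j x. \<integral>k. (psi_alpha a b h \<theta> j k * hFT h u k) * ei (1/h * k * x) \<partial>lborel"
    and "Q \<equiv> \<lambda>j x. \<integral>k. (psi_beta a b h \<theta> j k * hFT h u k) * ei (- 1/h * k * x) \<partial>lborel"
  shows "AE x in lborel. Wop a b h \<theta> u x - u x
    = (P (region a b x) x + Q (region a b x) x) / complex_of_real (sqrt (2*pi*h))"
proof -
  define F where "F = hFT h u"
  have [measurable]: "F \<in> borel_measurable borel" unfolding F_def by measurable
  have Fe_int: "integrable lborel (\<lambda>k. m k * F k * ei (s * k * x))"
    if [measurable]: "m \<in> borel_measurable borel" and "\<And>k. norm (m k) \<le> B" for m B s x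
    using integrable_mult_bounded[OF Fi[folded F_def], of "\<lambda>k. m k * ei (s * k * x)" B] that
    by (simp add: norm_mult mult_ac)
  have decomposition: "(\<integral>k. psi a b h \<theta> k x * F k \<partial>lborel)
      = (\<integral>k. F k * ei (1/h * k * x) \<partial>lborel) + P (region a b x) x + Q (region a b x) x" for x
  proof -
    let ?r = "region a b x"
    have "(\<integral>k. psi a b h \<theta> k x * F k \<partial>lborel)
        = (\<integral>k. 1 * F k * ei (1/h * k * x) + psi_alpha a b h \<theta> ?r k * F k * ei (1/h * k * x)
              + psi_beta a b h \<theta> ?r k * F k * ei (- 1/h * k * x) \<partial>lborel)"
      by (intro Bochner_Integration.integral_cong refl)
         (simp add: psi_eq_plane_wave_plus_correction algebra_simps)
    also have "\<dots> = (\<integral>k. F k * ei (1/h * k * x) \<partial>lborel) + P ?r x + Q ?r x"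
      using Fe_int[of "\<lambda>_. 1" 1 "1/h" x]
        Fe_int[of "psi_alpha a b h \<theta> ?r" _ "1/h" x, OF _ norm_psi_alpha_le[OF th]]
        Fe_int[of "psi_beta a b h \<theta> ?r" _ "- 1/h" x, OF _ norm_psi_beta_le[OF th]]
      by (simp add: P_def Q_def F_def)
    finally show ?thesis .
  qed
  have "AE x in lborel. (\<integral>k. F k * ei (1/h * k * x) \<partial>lborel) / complex_of_real (sqrt (2*pi*h)) = u x"
    using hFT_inversion[OF h um ui Fi] by (simp add: F_def)
  then show ?thesis
    by eventually_elim (simp add: Wop_def decomposition[unfolded F_def] add_divide_distrib F_def)
qed

lemma Wop_minus_id_L2_bound:
  fixes a b h :: real and \<theta> :: complex and u :: "real \<Rightarrow> complex"
  assumes h: "h > 0" and th: "norm \<theta> \<le> 1/16" and um[measurable]: "u \<in> borel_measurable borel"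
    and ui: "integrable lborel u" and Fi: "integrable lborel (hFT h u)"
  shows "(\<integral>\<^sup>+x. ennreal ((cmod (Wop a b h \<theta> u x - u x))\<^sup>2) \<partial>lborel)
     \<le> ennreal ((70 * cmod \<theta>)\<^sup>2) * (\<integral>\<^sup>+x. ennreal ((cmod (u x))\<^sup>2) \<partial>lborel)"
proof -
  define c where "c = sqrt (2*pi*h)"
  have c2: "c\<^sup>2 = 2*pi*h" using h by (simp add: c_def)
  define U where "U = (\<integral>\<^sup>+x. ennreal ((cmod (u x))\<^sup>2) \<partial>lborel)"
  define M where "M = 20 * norm \<theta>"
  define P where "P j x = (\<integral>k. (psi_alpha a b h \<theta> j k * hFT h u k) * ei (1/h * k * x) \<partial>lborel)" for j x
  define Q where "Q j x = (\<integral>k. (psi_beta a b h \<theta> j k * hFT h u k) * ei (- 1/h * k * x) \<partial>lborel)" for j x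
  have P_meas[measurable]: "P j \<in> borel_measurable borel"
    and Q_meas[measurable]: "Q j \<in> borel_measurable borel" for j
  proof -
    have "(\<lambda>x. \<integral>k. (psi_alpha a b h \<theta> j k * hFT h u k) * ei (1/h * k * x) \<partial>lborel) \<in> borel_measurable lborel"
      "(\<lambda>x. \<integral>k. (psi_beta a b h \<theta> j k * hFT h u k) * ei (- 1/h * k * x) \<partial>lborel) \<in> borel_measurable lborel"
      by measurable
    then show "P j \<in> borel_measurable borel" "Q j \<in> borel_measurable borel"
      unfolding P_def[abs_def] Q_def[abs_def] by simp_all
  qed
  have "(\<integral>\<^sup>+x. ennreal ((cmod (Wop a b h \<theta> u x - u x))\<^sup>2) \<partial>lborel)
      = (\<integral>\<^sup>+x. ennreal (1 / c\<^sup>2) * ennreal ((cmod (P (region a b x) x + Q (region a b x) x))\<^sup>2) \<partial>lborel)"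
    using Wop_minus_id_ae_eq[OF h th um ui Fi, of a b]
    by (intro nn_integral_cong_AE, eventually_elim)
       (simp add: P_def Q_def c_def norm_divide power_divide ennreal_mult[symmetric])
  also have "\<dots> = ennreal (1 / c\<^sup>2) * (\<integral>\<^sup>+x. ennreal ((cmod (P (region a b x) x + Q (region a b x) x))\<^sup>2) \<partial>lborel)"
    by (rule nn_integral_cmult, rule measurable_compose_countable[where
          f="\<lambda>j x. ennreal ((cmod (P j x + Q j x))\<^sup>2)"]) measurable
  also have "\<dots> \<le> ennreal (1 / c\<^sup>2) * (4 * of_nat 3 * (ennreal (2*pi*h * M\<^sup>2) * U))"
  proof (rule mult_left_mono)
    have coefficient_le: "norm (psi_alpha a b h \<theta> j k) \<le> M" "norm (psi_beta a b h \<theta> j k) \<le> M" for j k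
      unfolding M_def by (rule norm_psi_alpha_le[OF th], rule norm_psi_beta_le[OF th])
    have s: "\<bar>1/h\<bar> = 1/h" "\<bar>- 1/h\<bar> = 1/h" using h by simp_all
    have "(\<integral>\<^sup>+x. ennreal ((cmod (P j x))\<^sup>2) \<partial>lborel) \<le> ennreal (2*pi*h * M\<^sup>2) * U"
      "(\<integral>\<^sup>+x. ennreal ((cmod (Q j x))\<^sup>2) \<partial>lborel) \<le> ennreal (2*pi*h * M\<^sup>2) * U" for j
      unfolding P_def Q_def U_def
      by (rule hFT_multiplier_L2_bound[OF h um ui Fi psi_alpha_measurable coefficient_le(1) s(1)],
          rule hFT_multiplier_L2_bound[OF h um ui Fi psi_beta_measurable coefficient_le(2) s(2)])
    moreover have "region a b x < 3" for x by (simp add: region_def)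
    ultimately show "(\<integral>\<^sup>+x. ennreal ((cmod (P (region a b x) x + Q (region a b x) x))\<^sup>2) \<partial>lborel)
        \<le> 4 * of_nat 3 * (ennreal (2*pi*h * M\<^sup>2) * U)"
      using P_meas Q_meas by (intro nn_integral_piecewise_sum_sq_le)
  qed simp
  also have "\<dots> = ennreal (1 / c\<^sup>2) * ennreal (12 * (2*pi*h * M\<^sup>2)) * U"
    using h by (simp add: ennreal_mult mult_ac)
  also have "ennreal (1 / c\<^sup>2) * ennreal (12 * (2*pi*h * M\<^sup>2)) * U = ennreal (12 * M\<^sup>2) * U"
    using c2 h by (subst ennreal_mult[symmetric]) (simp_all add: field_simps)
  also have "\<dots> \<le> ennreal ((70 * cmod \<theta>)\<^sup>2) * U"
    by (intro mult_right_mono ennreal_leI) (simp_all add: M_def power_mult_distrib)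
  finally show ?thesis unfolding U_def .
qed

theorem lemma2p1:
  fixes a b :: real
  assumes "a < b"
  shows "\<exists>c0 C. c0 > 0 \<and> C > 0 \<and>
    (\<forall>h::real. h > 0 \<longrightarrow> (\<forall>\<theta>::complex. cmod \<theta> \<le> c0 \<longrightarrow>
      (\<forall>u :: real \<Rightarrow> complex.
         integrable lborel u \<and> u \<in> borel_measurable lborel \<and>
         (\<integral>\<^sup>+ x. ennreal ((cmod (u x))\<^sup>2) \<partial>lborel) < \<infinity> \<and>
         integrable lborel (hFT h u) \<longrightarrow>
           (\<lambda>x. Wop a b h \<theta> u x - u x) \<in> borel_measurable lborel \<and>
           (\<integral>\<^sup>+ x. ennreal ((cmod (Wop a b h \<theta> u x - u x))\<^sup>2) \<partial>lborel)
             \<le> ennreal ((C * cmod \<theta>)\<^sup>2) * (\<integral>\<^sup>+ x. ennreal ((cmod (u x))\<^sup>2) \<partial>lborel))))"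
proof (intro exI conjI allI impI)
  show "(1/16::real) > 0" "(70::real) > 0" by simp_all
  fix h :: real and \<theta> :: complex and u :: "real \<Rightarrow> complex"
  assume h: "h > 0" and th: "cmod \<theta> \<le> 1/16"
    and "integrable lborel u \<and> u \<in> borel_measurable lborel \<and>
         (\<integral>\<^sup>+ x. ennreal ((cmod (u x))\<^sup>2) \<partial>lborel) < \<infinity> \<and> integrable lborel (hFT h u)"
  then have ui: "integrable lborel u" and um[measurable]: "u \<in> borel_measurable borel"
    and Fi: "integrable lborel (hFT h u)" by auto
  show "(\<lambda>x. Wop a b h \<theta> u x - u x) \<in> borel_measurable lborel" by measurable
  show "(\<integral>\<^sup>+ x. ennreal ((cmod (Wop a b h \<theta> u x - u x))\<^sup>2) \<partial>lborel)
      \<le> ennreal ((70 * cmod \<theta>)\<^sup>2) * (\<integral>\<^sup>+ x. ennreal ((cmod (u x))\<^sup>2) \<partial>lborel)"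
    by (rule Wop_minus_id_L2_bound[OF h th um ui Fi])
qed

end
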